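(* Let $J\subset\mathbb{C}$ be a $C^1$ Jordan curve, i.e. $J=\gamma(\mathbb{R}/2\pi\mathbb{Z})$ for an injective $C^1$ map $\gamma:\mathbb{R}/2\pi\mathbb{Z}\to\mathbb{C}$ with $\gamma'\neq0$, and let $n\ge3$. Let \[ W=\Big\{(a_1,\dots,a_n)\in\mathbb{R}_{+}^n:\ a_i<\sum\nolimits_{j\ne i}a_j \text{ for } i=1,\dots,n\Big\}. \] Then for every $A_0\in J$ (reparametrize so that $\gamma(0)=A_0$) and for Lebesgue-almost every $(a_1,\dots,a_n)\in W$, the set of tuples $(\sigma_1,\dots,\sigma_{n-1},\lambda)$ with $0<\sigma_1<\dots<\sigma_{n-1}<2\pi$, $\lambda>0$ and \[ |\gamma(\sigma_i)-\gamma(\sigma_{i-1})|=\lambda a_i\quad (i=1,\dots,n),\qquad \sigma_0=0,\ \sigma_n=2\pi, \] is finite. That is, there are at most finitely many neatly $J$-cyclic polygons with starting vertex $A_0$ and side lengths $a_1,\dots,a_n$.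
   Context: A polygon $Q_n=A_0\cdots A_{n-1}$ is neatly $J$-cyclic (for an oriented Jordan curve $J$) if it has a similar copy whose vertices lie on $J$ in this order according to the orientation of $J$; here its starting vertex on $J$ is required to be $A_0$. *)

theory Defs
  imports "HOL-Analysis.Analysis"
begin

definition C1_jordan_param :: "(real \<Rightarrow> complex) \<Rightarrow> bool" where
  "C1_jordan_param \<gamma> \<longleftrightarrow>
     (\<forall>t. \<gamma> (t + 2 * pi) = \<gamma> t) \<and>
     \<gamma> C1_differentiable_on UNIV \<and>
     (\<forall>t. vector_derivative \<gamma> (at t) \<noteq> 0) \<and>
     (\<forall>s\<in>{0..<2*pi}. \<forall>t\<in>{0..<2*pi}. \<gamma> s = \<gamma> t \<longrightarrow> s = t)"

text \<open>The set W, with the n side lengths a_1..a_n stored as a 0 .. a (n-1).\<close>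
definition polygon_sides :: "nat \<Rightarrow> (nat \<Rightarrow> real) set" where
  "polygon_sides n = {a. \<forall>i<n. 0 < a i \<and> a i < (\<Sum>j\<in>{..<n} - {i}. a j)}"

definition vparam :: "nat \<Rightarrow> real list \<Rightarrow> nat \<Rightarrow> real" where
  "vparam n s i = (if i = 0 then 0 else if i = n then 2 * pi else s ! (i - 1))"

text \<open>Tuples (sigma_1..sigma_(n-1), lambda) giving neatly J-cyclic polygons starting at
  gamma t0 with side lengths a_1..a_n (curve reparametrised as sigma \<mapsto> gamma (t0 + sigma)).\<close>
definition neat_cyclic_params ::
    "(real \<Rightarrow> complex) \<Rightarrow> real \<Rightarrow> nat \<Rightarrow> (nat \<Rightarrow> real) \<Rightarrow> (real list \<times> real) set" where
  "neat_cyclic_params \<gamma> t0 n a =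
     {(s, l). length s = n - 1 \<and> 0 < l \<and>
        (\<forall>i<n. vparam n s i < vparam n s (Suc i)) \<and>
        (\<forall>i<n. cmod (\<gamma> (t0 + vparam n s (Suc i)) - \<gamma> (t0 + vparam n s i)) = l * a i)}"

end

theory Submission
  imports Defs "Jordan_Normal_Form.Determinant" "HOL-Library.Periodic_Fun"
begin

text \<open>Put the vertex parameters \<open>\<sigma>\<^sub>1, \<dots>, \<sigma>\<^sub>n\<^sub>-\<^sub>1\<close> and the scale \<open>\<lambda>\<close> into one point \<open>x \<in> \<real>\<^sup>n\<close>; the
  polygons in question are the solutions of \<open>shape x = a\<close>, where \<open>shape x\<close> is the vector of side
  lengths divided by \<open>\<lambda>\<close>. By the easy half of Sard's lemma the critical values of this
  differentiable map form a null set, so for almost every \<open>a\<close> all solutions are regular, hence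
  isolated. They are also bounded, so infinitely many of them would accumulate. A limit with
  \<open>\<lambda> > 0\<close> is again a regular solution, contradicting isolation. A limit with \<open>\<lambda> = 0\<close> has all
  vertices at \<open>A\<^sub>0\<close>; since the curve is \<open>C\<^sup>1\<close> with nonzero tangent there, the polygons close to
  the limit would have one side almost as long as all the others together, which the polygon
  inequalities \<open>a\<^sub>i < \<Sum>\<^sub>j\<^sub>\<noteq>\<^sub>i a\<^sub>j\<close> forbid.\<close>

lemma tendsto_coordinate:
  fixes f :: "'a \<Rightarrow> 'b::countable \<Rightarrow> 'c::metric_space"
  assumes "(f \<longlongrightarrow> l) F"
  shows "((\<lambda>m. f m j) \<longlongrightarrow> l j) F"
proof -
  have "continuous_on UNIV (\<lambda>x :: 'b \<Rightarrow> 'c. x j)" by simp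
  then have "isCont (\<lambda>x. x j) l"
    using continuous_on_eq_continuous_at[OF open_UNIV, of "\<lambda>x :: 'b \<Rightarrow> 'c. x j"] by simp
  from isCont_tendsto_compose[OF this assms] show ?thesis .
qed

lemma ex_all_close_of_tendsto:
  fixes X :: "'i \<Rightarrow> nat \<Rightarrow> real"
  assumes "finite I" and lim: "\<And>i. i \<in> I \<Longrightarrow> X i \<longlonglongrightarrow> l i" and "\<rho> > 0"
  obtains m where "\<And>i. i \<in> I \<Longrightarrow> \<bar>X i m - l i\<bar> < \<rho>"
proof -
  have "\<forall>\<^sub>F m in sequentially. \<forall>i\<in>I. \<bar>X i m - l i\<bar> < \<rho>"
  proof (intro eventually_ball_finite ballI)
    fix i assume "i \<in> I"
    from tendstoD[OF lim[OF this] \<open>\<rho> > 0\<close>] show "\<forall>\<^sub>F m in sequentially. \<bar>X i m - l i\<bar> < \<rho>"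
      by (simp add: dist_real_def)
  qed (rule \<open>finite I\<close>)
  then show ?thesis using that unfolding eventually_sequentially by blast
qed

lemma compact_PiE_box: "compact (PiE {..<(n::nat)} (\<lambda>_. {-R..R::real}))"
proof -
  define S where "S i = (if i < n then {-R..R} else {undefined})" for i :: nat
  have "PiE {..<n} (\<lambda>_. {-R..R::real}) = PiE UNIV S"
    unfolding S_def by (auto simp: PiE_def Pi_def extensional_def split: if_splits)
  moreover have "compactin (product_topology (\<lambda>_. euclidean) UNIV) (PiE UNIV S)"
    unfolding compactin_PiE by (auto simp: S_def)
  ultimately show ?thesis by (simp add: euclidean_product_topology)
qed

section \<open>Sard's lemma for coordinatewise differentiable maps\<close>

definition slab :: "nat set \<Rightarrow> (nat \<Rightarrow> real) \<Rightarrow> (nat \<Rightarrow> real) \<Rightarrow> nat \<Rightarrow> real \<Rightarrow> real \<Rightarrow> (nat \<Rightarrow> real) set"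
  where "slab V c w k r e = {z \<in> PiE V (\<lambda>_. UNIV).
     (\<forall>i\<in>V - {k}. \<bar>z i - c i\<bar> \<le> r) \<and> \<bar>\<Sum>i\<in>V. w i * (z i - c i)\<bar> \<le> e}"

lemma slab_mono: "r \<le> r' \<Longrightarrow> e \<le> e' \<Longrightarrow> slab V c w k r e \<subseteq> slab V c w k r' e'"
  unfolding slab_def by force

lemma sets_slab: "slab V c w k r e \<in> sets (PiM V (\<lambda>_. lborel))"
proof -
  have "{z \<in> space (PiM V (\<lambda>_. lborel)). (\<forall>i\<in>V - {k}. \<bar>z i - c i\<bar> \<le> r) \<and>
          \<bar>\<Sum>i\<in>V. w i * (z i - c i)\<bar> \<le> e} \<in> sets (PiM V (\<lambda>_. lborel))"
    by measurable
  then show ?thesis by (simp add: slab_def space_PiM)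
qed

text \<open>Fubini in the coordinate \<open>k\<close>: since \<open>w k = 1\<close>, each line parallel to the \<open>k\<close>-th axis
  meets the slab in an interval of length \<open>2 e\<close>.\<close>
lemma emeasure_slab_le:
  assumes V: "finite V" "k \<in> V" and wk: "w k = 1" and r: "r \<ge> 0" and e: "e \<ge> 0"
  shows "emeasure (PiM V (\<lambda>_. lborel)) (slab V c w k r e) \<le> ennreal ((2*r)^(card V - 1) * (2*e))"
proof -
  interpret product_sigma_finite "\<lambda>_. lborel" by standard
  define I where "I = V - {k}"
  have VI: "V = insert k I" "k \<notin> I" "finite I" using V by (auto simp: I_def)
  define B where "B = PiE I (\<lambda>i. {c i - r..c i + r})"
  define \<phi> where "\<phi> x = c k - (\<Sum>i\<in>I. w i * (x i - c i))" for x :: "nat \<Rightarrow> real"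
  let ?S = "slab V c w k r e"
  have "emeasure (PiM V (\<lambda>_. lborel)) ?S = \<integral>\<^sup>+ z. indicator ?S z \<partial>(PiM V (\<lambda>_. lborel))"
    using sets_slab by simp
  also have "\<dots> = \<integral>\<^sup>+ x. (\<integral>\<^sup>+ y. indicator ?S (x(k := y)) \<partial>lborel) \<partial>(PiM I (\<lambda>_. lborel))"
    unfolding VI(1) by (rule product_nn_integral_insert) (use VI sets_slab in auto)
  also have "\<dots> \<le> \<integral>\<^sup>+ x. ennreal (2*e) * indicator B x \<partial>(PiM I (\<lambda>_. lborel))"
  proof (rule nn_integral_mono)
    fix x :: "nat \<Rightarrow> real" assume x: "x \<in> space (PiM I (\<lambda>_. lborel))"
    have "indicator ?S (x(k := y)) \<le> (indicator B x * indicator {\<phi> x - e..\<phi> x + e} y :: ennreal)"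
      for y
    proof (cases "x(k := y) \<in> ?S")
      case True
      have xI: "(x(k := y)) i = x i" if "i \<in> I" for i using VI that by auto
      have "\<forall>i\<in>I. \<bar>x i - c i\<bar> \<le> r"
        using True xI by (auto simp: slab_def I_def)
      then have "x \<in> B"
        using x by (auto simp: B_def space_PiM abs_le_iff)
      have "(\<Sum>i\<in>V. w i * ((x(k := y)) i - c i)) = (y - c k) + (\<Sum>i\<in>I. w i * (x i - c i))"
        unfolding VI(1) using VI wk xI by (simp cong: sum.cong)
      then have "y \<in> {\<phi> x - e..\<phi> x + e}"
        using True by (auto simp: slab_def \<phi>_def abs_le_iff)
      with \<open>x \<in> B\<close> show ?thesis by (simp add: indicator_def)
    qed simp
    then have "(\<integral>\<^sup>+ y. indicator ?S (x(k := y)) \<partial>lborel)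
        \<le> (\<integral>\<^sup>+ y. indicator B x * indicator {\<phi> x - e..\<phi> x + e} y \<partial>lborel)"
      by (intro nn_integral_mono)
    also have "\<dots> = indicator B x * ennreal (2*e)"
      using e by (simp add: nn_integral_cmult)
    finally show "(\<integral>\<^sup>+ y. indicator ?S (x(k := y)) \<partial>lborel) \<le> ennreal (2*e) * indicator B x"
      by (simp add: mult.commute)
  qed
  also have "\<dots> = ennreal (2*e) * emeasure (PiM I (\<lambda>_. lborel)) B"
    by (rule nn_integral_cmult_indicator) (use VI in \<open>auto simp: B_def intro!: sets_PiM_I_finite\<close>)
  also have "emeasure (PiM I (\<lambda>_. lborel)) B = (\<Prod>i\<in>I. ennreal (2*r))"
    unfolding B_def using VI r by (subst emeasure_PiM) (auto intro!: prod.cong)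
  also have "\<dots> = ennreal ((2*r)^(card V - 1))"
    using VI r by (simp add: prod_ennreal ennreal_power)
  finally show ?thesis using r e by (simp add: ennreal_mult' mult.commute)
qed

lemma emeasure_UN_slab_le:
  assumes "finite C" "finite V" and k: "\<And>c. c \<in> C \<Longrightarrow> k c \<in> V \<and> w c (k c) = 1"
    and "r \<ge> 0" "e \<ge> 0"
  shows "emeasure (PiM V (\<lambda>_. lborel)) (\<Union>c\<in>C. slab V (z c) (w c) (k c) r e)
    \<le> of_nat (card C) * ennreal ((2*r)^(card V - 1) * (2*e))"
proof -
  have "emeasure (PiM V (\<lambda>_. lborel)) (\<Union>c\<in>C. slab V (z c) (w c) (k c) r e)
      \<le> (\<Sum>c\<in>C. emeasure (PiM V (\<lambda>_. lborel)) (slab V (z c) (w c) (k c) r e))"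
    using assms by (intro emeasure_subadditive_finite) (auto intro: sets_slab)
  also have "\<dots> \<le> (\<Sum>c\<in>C. ennreal ((2*r)^(card V - 1) * (2*e)))"
    using assms by (intro sum_mono emeasure_slab_le) auto
  finally show ?thesis by simp
qed

definition thin_at :: "nat set \<Rightarrow> (nat \<Rightarrow> real) set \<Rightarrow> ((nat \<Rightarrow> real) \<Rightarrow> (nat \<Rightarrow> real)) \<Rightarrow>
    real \<Rightarrow> real \<Rightarrow> real \<Rightarrow> (nat \<Rightarrow> real) \<Rightarrow> nat \<Rightarrow> (nat \<Rightarrow> real) \<Rightarrow> bool"
  where "thin_at V S G \<epsilon> M \<delta> x k w \<longleftrightarrow> k \<in> V \<and> w k = 1 \<and>
    (\<forall>r y. 0 \<le> r \<longrightarrow> r \<le> \<delta> \<longrightarrow> y \<in> S \<longrightarrow> (\<forall>i\<in>V. \<bar>y i - x i\<bar> \<le> r) \<longrightarrow>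
       G y \<in> slab V (G x) w k (M * r) (\<epsilon> * r))"

lemma thin_at_mono:
  assumes "thin_at V S G \<epsilon> M \<delta> x k w" "\<delta>' \<le> \<delta>" "M \<le> M'"
  shows "thin_at V S G \<epsilon> M' \<delta>' x k w"
  using assms slab_mono[OF mult_right_mono[OF \<open>M \<le> M'\<close>] order_refl]
  unfolding thin_at_def by (meson order_trans subsetD)

lemma same_floor_divide_close:
  fixes a b h :: real
  assumes "h > 0" "\<lfloor>a / h\<rfloor> = \<lfloor>b / h\<rfloor>"
  shows "\<bar>a - b\<bar> \<le> h"
proof -
  have "of_int \<lfloor>a / h\<rfloor> * h \<le> a" "a < (of_int \<lfloor>a / h\<rfloor> + 1) * h"
       "of_int \<lfloor>b / h\<rfloor> * h \<le> b" "b < (of_int \<lfloor>b / h\<rfloor> + 1) * h"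
    using assms(1) by (auto simp: floor_divide_lower floor_divide_upper)
  then show ?thesis using assms(2) by (auto simp: algebra_simps abs_le_iff)
qed

lemma floor_divide_inverse_Suc_bounded:
  fixes y :: real
  assumes "\<bar>y\<bar> < real R"
  shows "\<lfloor>y / (1 / real (Suc j))\<rfloor> \<in> {- (int R * int (Suc j))..<int R * int (Suc j)}"
proof -
  have upper: "y * real (Suc j) < real R * real (Suc j)"
    using assms by (intro mult_strict_right_mono) auto
  have "- y * real (Suc j) < real R * real (Suc j)"
    using assms by (intro mult_strict_right_mono) auto
  with upper show ?thesis by (auto simp: floor_less_iff le_floor_iff)
qed

lemma grid_cover_volume:
  fixes R M \<epsilon> :: real
  assumes "d \<ge> 1"
  shows "(2 * R * real (Suc j))^d * ((2 * (M * (1 / real (Suc j))))^(d - 1) * (2 * (\<epsilon> * (1 / real (Suc j)))))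
    = (2*R)^d * (2*M)^(d - 1) * (2*\<epsilon>)"
proof -
  define h where "h = 1 / real (Suc j)"
  have "h^(d - 1) * h * real (Suc j)^d = 1"
  proof -
    have "h^(d - 1) * h = h^d" using assms by (cases d) (auto simp: mult.commute)
    then show ?thesis by (simp add: h_def power_one_over)
  qed
  moreover have "(2 * R * real (Suc j))^d * ((2 * (M * h))^(d - 1) * (2 * (\<epsilon> * h)))
      = (2*R)^d * (2*M)^(d - 1) * (2*\<epsilon>) * (h^(d - 1) * h * real (Suc j)^d)"
    by (simp only: power_mult_distrib mult_ac)
  ultimately show ?thesis by (simp add: h_def)
qed

text \<open>The easy half of Sard's lemma at a fixed scale: points of a box of side \<open>2 R\<close> split into
  \<open>(2 R (j+1))\<^sup>d\<close> grid cells of side \<open>h = 1/(j+1)\<close>, and the image of each cell lies in one slab of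
  measure \<open>(2 M h)\<^sup>d\<^sup>-\<^sup>1 2 \<epsilon> h\<close>.\<close>
lemma thin_points_image_cover:
  fixes V :: "nat set" and S :: "(nat \<Rightarrow> real) set" and G :: "(nat \<Rightarrow> real) \<Rightarrow> (nat \<Rightarrow> real)"
    and R j :: nat
  assumes V: "finite V" "V \<noteq> {}" and \<epsilon>: "\<epsilon> \<ge> 0" and M: "M \<ge> 0"
  defines "T \<equiv> {x \<in> S. (\<forall>i\<in>V. \<bar>x i\<bar> < real R) \<and> (\<exists>k w. thin_at V S G \<epsilon> M (1 / real (Suc j)) x k w)}"
  shows "\<exists>N\<in>sets (PiM V (\<lambda>_. lborel)). G ` T \<subseteq> N \<and>
           emeasure (PiM V (\<lambda>_. lborel)) N \<le> ennreal ((2*real R)^card V * (2*M)^(card V - 1) * (2*\<epsilon>))"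
proof -
  define h where "h = 1 / real (Suc j)"
  have h: "h > 0" by (simp add: h_def)
  define d where "d = card V"
  have d: "d \<ge> 1" using V by (simp add: d_def Suc_le_eq card_gt_0_iff)
  define L where "L = int R * int (Suc j)"
  define cell where "cell x = restrict (\<lambda>i. \<lfloor>x i / h\<rfloor>) V" for x :: "nat \<Rightarrow> real"
  define Cs where "Cs = PiE V (\<lambda>_. {-L..<L})"
  define rep where "rep c = (SOME x. x \<in> T \<and> cell x = c)" for c
  define dir where "dir c = (SOME (k, w). thin_at V S G \<epsilon> M h (rep c) k w)" for c
  define Sl where "Sl c = slab V (G (rep c)) (snd (dir c)) (fst (dir c)) (M * h) (\<epsilon> * h)" for c
  define N where "N = (\<Union>c\<in>cell ` T. Sl c)"
  have rep: "rep c \<in> T" "cell (rep c) = c" if "c \<in> cell ` T" for c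
    using someI_ex[of "\<lambda>x. x \<in> T \<and> cell x = c"] that by (auto simp: rep_def)
  have dir: "thin_at V S G \<epsilon> M h (rep c) (fst (dir c)) (snd (dir c))" if "c \<in> cell ` T" for c
  proof -
    have "\<exists>p. case p of (k, w) \<Rightarrow> thin_at V S G \<epsilon> M h (rep c) k w"
      using rep(1)[OF that] by (auto simp: T_def h_def)
    then show ?thesis unfolding dir_def by (metis (mono_tags, lifting) case_prod_beta someI_ex)
  qed
  have cells: "cell ` T \<subseteq> Cs"
    using floor_divide_inverse_Suc_bounded by (auto simp: T_def Cs_def cell_def L_def h_def)
  have finCs: "finite Cs" unfolding Cs_def using V by (simp add: finite_PiE)
  have "G ` T \<subseteq> N"
  proof
    fix z assume "z \<in> G ` T"
    then obtain y where y: "y \<in> T" "z = G y" by auto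
    define c where "c = cell y"
    have c: "c \<in> cell ` T" using y by (simp add: c_def)
    have "\<bar>y i - rep c i\<bar> \<le> h" if "i \<in> V" for i
    proof (rule same_floor_divide_close[OF h])
      have "cell (rep c) i = cell y i" using rep(2)[OF c] by (simp add: c_def)
      then show "\<lfloor>y i / h\<rfloor> = \<lfloor>rep c i / h\<rfloor>" using that by (simp add: cell_def)
    qed
    moreover have "y \<in> S" using y by (simp add: T_def)
    ultimately have "z \<in> Sl c"
      using dir[OF c] h unfolding thin_at_def Sl_def y(2) by auto
    then show "z \<in> N" using c by (auto simp: N_def)
  qed
  moreover have "N \<in> sets (PiM V (\<lambda>_. lborel))"
    unfolding N_def Sl_def using finite_subset[OF cells finCs] by (intro sets.finite_UN sets_slab) auto
  moreover have "emeasure (PiM V (\<lambda>_. lborel)) N \<le> ennreal ((2*real R)^d * (2*M)^(d - 1) * (2*\<epsilon>))"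
  proof -
    have "emeasure (PiM V (\<lambda>_. lborel)) N
        \<le> of_nat (card (cell ` T)) * ennreal ((2*(M*h))^(d - 1) * (2*(\<epsilon>*h)))"
      unfolding N_def Sl_def d_def using finite_subset[OF cells finCs] V h M \<epsilon> dir
      by (intro emeasure_UN_slab_le) (auto simp: thin_at_def)
    also have "\<dots> \<le> of_nat (card Cs) * ennreal ((2*(M*h))^(d - 1) * (2*(\<epsilon>*h)))"
      using card_mono[OF finCs cells] by (simp add: mult_right_mono)
    also have "of_nat (card Cs) * ennreal ((2*(M*h))^(d - 1) * (2*(\<epsilon>*h)))
        = ennreal ((2*real R)^d * (2*M)^(d - 1) * (2*\<epsilon>))"
    proof -
      have "real (card Cs) = (2 * real R * real (Suc j))^d"
        using V by (simp add: Cs_def d_def card_PiE L_def nat_mult_distrib power_mult_distrib)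
      then have "real (card Cs) * ((2*(M*h))^(d - 1) * (2*(\<epsilon>*h)))
          = (2*real R)^d * (2*M)^(d - 1) * (2*\<epsilon>)"
        using grid_cover_volume[OF d] by (simp add: h_def)
      then show ?thesis
        using M \<epsilon> h by (simp add: ennreal_mult[symmetric] ennreal_of_nat_eq_real_of_nat)
    qed
    finally show ?thesis .
  qed
  ultimately show ?thesis unfolding d_def by blast
qed

lemma emeasure_cover_Union_incseq:
  assumes inc: "incseq A" and cover: "\<And>j. \<exists>N\<in>sets M. A j \<subseteq> N \<and> emeasure M N \<le> K"
  shows "\<exists>N\<in>sets M. (\<Union>j. A j) \<subseteq> N \<and> emeasure M N \<le> K"
proof -
  have "\<forall>j. \<exists>N. N \<in> sets M \<and> A j \<subseteq> N \<and> emeasure M N \<le> K" using cover by blast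
  then obtain N where N: "\<And>j. N j \<in> sets M" "\<And>j. A j \<subseteq> N j" "\<And>j. emeasure M (N j) \<le> K"
    by (metis choice)
  text \<open>The covers need not increase, but their tails \<open>\<Inter>i. N (j + i)\<close> do and still cover \<open>A j\<close>.\<close>
  define N' where "N' j = (\<Inter>i. N (j + i))" for j
  have sets: "N' j \<in> sets M" for j unfolding N'_def using N(1) by auto
  have "incseq N'"
  proof (rule incseq_SucI)
    show "N' j \<subseteq> N' (Suc j)" for j
      unfolding N'_def by (auto simp: INT_iff) (metis add_Suc_shift add_Suc)
  qed
  have "A j \<subseteq> N' j" for j
  proof -
    have "A j \<subseteq> N (j + i)" for i using N(2)[of "j + i"] monoD[OF inc, of j "j + i"] by auto
    then show ?thesis by (auto simp: N'_def)
  qed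
  moreover have "emeasure M (\<Union>j. N' j) \<le> K"
  proof -
    have "emeasure M (N' j) \<le> K" for j
    proof -
      have "N' j \<subseteq> N j" unfolding N'_def by (metis INT_lower UNIV_I add_0_right)
      then show ?thesis using N(1,3) emeasure_mono order_trans by metis
    qed
    moreover have "emeasure M (\<Union>j. N' j) = (SUP j. emeasure M (N' j))"
      using sets \<open>incseq N'\<close> by (intro SUP_emeasure_incseq[symmetric]) auto
    ultimately show ?thesis by (simp add: SUP_least)
  qed
  ultimately show ?thesis using sets by blast
qed

lemma AE_not_in_if_small_covers:
  assumes "\<And>\<epsilon>. \<epsilon> > 0 \<Longrightarrow> \<exists>N\<in>sets M. A \<subseteq> N \<and> emeasure M N \<le> ennreal (C * \<epsilon>)"
  shows "AE x in M. x \<notin> A"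
proof -
  have "\<forall>l. \<exists>N. N \<in> sets M \<and> A \<subseteq> N \<and> emeasure M N \<le> ennreal (C * (1 / real (Suc l)))"
    using assms[of "1 / real (Suc _)"] by auto
  then obtain N where N: "\<And>l. N l \<in> sets M" "\<And>l. A \<subseteq> N l"
    "\<And>l. emeasure M (N l) \<le> ennreal (C * (1 / real (Suc l)))"
    by (metis choice)
  have "emeasure M (\<Inter>l. N l) \<le> 0 + ennreal e" if e: "e > 0" for e
  proof -
    obtain l :: nat where "C / e < real l" using reals_Archimedean2 by blast
    then have "C < e * real (Suc l)" using e by (simp add: divide_less_eq algebra_simps)
    then have "C * (1 / real (Suc l)) \<le> e" by (simp add: divide_le_eq)
    then have "emeasure M (N l) \<le> ennreal e" using N(3)[of l] ennreal_leI order_trans by blast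
    moreover have "emeasure M (\<Inter>l. N l) \<le> emeasure M (N l)"
      using N(1) by (intro emeasure_mono) auto
    ultimately show ?thesis by simp
  qed
  then have "emeasure M (\<Inter>l. N l) \<le> 0" by (rule ennreal_le_epsilon)
  then have "(\<Inter>l. N l) \<in> null_sets M" using N(1) by auto
  then show ?thesis using N(2) by (intro AE_I') auto
qed

lemma AE_not_in_image_uniformly_thin:
  fixes V :: "nat set" and S :: "(nat \<Rightarrow> real) set" and G :: "(nat \<Rightarrow> real) \<Rightarrow> (nat \<Rightarrow> real)"
    and m :: nat
  assumes V: "finite V" "V \<noteq> {}" and "A \<subseteq> S"
    and bounded: "\<And>x i. x \<in> A \<Longrightarrow> i \<in> V \<Longrightarrow> \<bar>x i\<bar> < real m"
    and thin: "\<And>x \<epsilon>. x \<in> A \<Longrightarrow> \<epsilon> > 0 \<Longrightarrow> \<exists>\<delta>>0. \<exists>k w. thin_at V S G \<epsilon> (real m) \<delta> x k w"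
  shows "AE z in PiM V (\<lambda>_. lborel). z \<notin> G ` A"
proof (rule AE_not_in_if_small_covers)
  fix \<epsilon> :: real assume \<epsilon>: "\<epsilon> > 0"
  define T where "T j = {x \<in> S. (\<forall>i\<in>V. \<bar>x i\<bar> < real m) \<and>
      (\<exists>k w. thin_at V S G \<epsilon> (real m) (1 / real (Suc j)) x k w)}" for j
  define C where "C = (2*real m)^card V * (2*real m)^(card V - 1) * 2"
  have cover_A: "G ` A \<subseteq> (\<Union>j. G ` T j)"
  proof
    fix z assume "z \<in> G ` A"
    then obtain x where x: "x \<in> A" "z = G x" by blast
    then obtain \<delta> k w where "\<delta> > 0" and thin_x: "thin_at V S G \<epsilon> (real m) \<delta> x k w"
      using thin \<epsilon> by blast
    obtain j where "inverse (real (Suc j)) < \<delta>" using reals_Archimedean[OF \<open>\<delta> > 0\<close>] by blast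
    then have "thin_at V S G \<epsilon> (real m) (1 / real (Suc j)) x k w"
      by (intro thin_at_mono[OF thin_x]) (auto simp: inverse_eq_divide)
    then have "x \<in> T j" using x(1) \<open>A \<subseteq> S\<close> bounded by (auto simp: T_def)
    then show "z \<in> (\<Union>j. G ` T j)" using x(2) by auto
  qed
  have inc: "incseq (\<lambda>j. G ` T j)"
  proof (intro monoI image_mono subsetI)
    fix j j' :: nat and x assume "j \<le> j'" "x \<in> T j"
    then obtain k w where x: "x \<in> S" "\<forall>i\<in>V. \<bar>x i\<bar> < real m"
      and thin_x: "thin_at V S G \<epsilon> (real m) (1 / real (Suc j)) x k w"
      by (auto simp: T_def)
    have "1 / real (Suc j') \<le> 1 / real (Suc j)" using \<open>j \<le> j'\<close> by (simp add: frac_le)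
    then have "thin_at V S G \<epsilon> (real m) (1 / real (Suc j')) x k w"
      by (rule thin_at_mono[OF thin_x _ order_refl])
    then show "x \<in> T j'" using x by (auto simp: T_def)
  qed
  have cover: "\<exists>N\<in>sets (PiM V (\<lambda>_. lborel)). G ` T j \<subseteq> N \<and>
      emeasure (PiM V (\<lambda>_. lborel)) N \<le> ennreal (C * \<epsilon>)" for j
  proof -
    have "C * \<epsilon> = (2*real m)^card V * (2*real m)^(card V - 1) * (2*\<epsilon>)"
      by (simp add: C_def)
    then show ?thesis
      unfolding T_def by (simp only:) (rule thin_points_image_cover[OF V], use \<epsilon> in auto)
  qed
  obtain N where N: "N \<in> sets (PiM V (\<lambda>_. lborel))" "(\<Union>j. G ` T j) \<subseteq> N"
      "emeasure (PiM V (\<lambda>_. lborel)) N \<le> ennreal (C * \<epsilon>)"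
    using emeasure_cover_Union_incseq[OF inc cover] by blast
  show "\<exists>N\<in>sets (PiM V (\<lambda>_. lborel)). G ` A \<subseteq> N \<and>
      emeasure (PiM V (\<lambda>_. lborel)) N \<le> ennreal (C * \<epsilon>)"
    by (intro bexI[OF _ N(1)] conjI N(3) order_trans[OF cover_A N(2)])
qed

lemma AE_not_in_image_thin:
  fixes V :: "nat set" and S :: "(nat \<Rightarrow> real) set" and G :: "(nat \<Rightarrow> real) \<Rightarrow> (nat \<Rightarrow> real)"
  assumes V: "finite V" "V \<noteq> {}"
    and thin: "\<And>x. x \<in> S \<Longrightarrow> \<exists>M. \<forall>\<epsilon>>0. \<exists>\<delta>>0. \<exists>k w. thin_at V S G \<epsilon> M \<delta> x k w"
  shows "AE z in PiM V (\<lambda>_. lborel). z \<notin> G ` S"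
proof -
  define A where "A m = {x \<in> S. (\<forall>i\<in>V. \<bar>x i\<bar> < real m) \<and>
      (\<forall>\<epsilon>>0. \<exists>\<delta>>0. \<exists>k w. thin_at V S G \<epsilon> (real m) \<delta> x k w)}" for m :: nat
  have "AE z in PiM V (\<lambda>_. lborel). z \<notin> G ` A m" for m
    by (rule AE_not_in_image_uniformly_thin[OF V]) (auto simp: A_def)
  then have AE_all: "AE z in PiM V (\<lambda>_. lborel). \<forall>m. z \<notin> G ` A m"
    by (simp add: AE_all_countable)
  have "S \<subseteq> (\<Union>m. A m)"
  proof
    fix x assume x: "x \<in> S"
    obtain M where M: "\<forall>\<epsilon>>0. \<exists>\<delta>>0. \<exists>k w. thin_at V S G \<epsilon> M \<delta> x k w" using thin[OF x] by blast
    obtain m :: nat where m: "max M (Max ((\<lambda>i. \<bar>x i\<bar>) ` V)) < real m"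
      using reals_Archimedean2 by blast
    have "\<bar>x i\<bar> < real m" if "i \<in> V" for i
    proof -
      have "\<bar>x i\<bar> \<le> Max ((\<lambda>i. \<bar>x i\<bar>) ` V)" using V that by (intro Max_ge) auto
      moreover have "Max ((\<lambda>i. \<bar>x i\<bar>) ` V) < real m" using m by simp
      ultimately show ?thesis by linarith
    qed
    moreover have "\<exists>\<delta>>0. \<exists>k w. thin_at V S G \<epsilon> (real m) \<delta> x k w" if "\<epsilon> > 0" for \<epsilon>
    proof -
      obtain \<delta> k w where \<delta>: "\<delta> > 0" and thin_x: "thin_at V S G \<epsilon> M \<delta> x k w"
        using M \<open>\<epsilon> > 0\<close> by blast
      have "M \<le> real m" using m by simp
      with thin_x have "thin_at V S G \<epsilon> (real m) \<delta> x k w" by (rule thin_at_mono[OF _ order_refl])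
      with \<delta> show ?thesis by blast
    qed
    ultimately have "x \<in> A m" using x by (simp add: A_def)
    then show "x \<in> (\<Union>m. A m)" by blast
  qed
  then have "G ` S \<subseteq> (\<Union>m. G ` A m)" by blast
  then show ?thesis by (intro eventually_mono[OF AE_all]) blast
qed

definition has_coord_gradient ::
    "nat set \<Rightarrow> ((nat \<Rightarrow> real) \<Rightarrow> real) \<Rightarrow> (nat \<Rightarrow> real) \<Rightarrow> (nat \<Rightarrow> real) \<Rightarrow> bool" where
  "has_coord_gradient V f l x \<longleftrightarrow> (\<forall>\<epsilon>>0. \<exists>\<delta>>0. \<forall>r y. 0 \<le> r \<longrightarrow> r < \<delta> \<longrightarrow>
     y \<in> PiE V (\<lambda>_. UNIV) \<longrightarrow> (\<forall>j\<in>V. \<bar>y j - x j\<bar> \<le> r) \<longrightarrow>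
     \<bar>f y - f x - (\<Sum>j\<in>V. l j * (y j - x j))\<bar> \<le> \<epsilon> * r)"

definition has_coord_jacobian ::
    "nat set \<Rightarrow> ((nat \<Rightarrow> real) \<Rightarrow> (nat \<Rightarrow> real)) \<Rightarrow> (nat \<Rightarrow> nat \<Rightarrow> real) \<Rightarrow> (nat \<Rightarrow> real) \<Rightarrow> bool" where
  "has_coord_jacobian V G L x \<longleftrightarrow> (\<forall>\<epsilon>>0. \<exists>\<delta>>0. \<forall>r y. 0 \<le> r \<longrightarrow> r < \<delta> \<longrightarrow>
     y \<in> PiE V (\<lambda>_. UNIV) \<longrightarrow> (\<forall>j\<in>V. \<bar>y j - x j\<bar> \<le> r) \<longrightarrow>
     (\<forall>i\<in>V. \<bar>G y i - G x i - (\<Sum>j\<in>V. L i j * (y j - x j))\<bar> \<le> \<epsilon> * r))"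

lemma has_coord_jacobianI:
  assumes V: "finite V" and grad: "\<And>i. i \<in> V \<Longrightarrow> has_coord_gradient V (\<lambda>y. G y i) (L i) x"
  shows "has_coord_jacobian V G L x"
  unfolding has_coord_jacobian_def
proof (intro allI impI)
  fix \<epsilon> :: real assume "\<epsilon> > 0"
  then have "\<forall>i\<in>V. \<exists>\<delta>>0. \<forall>r y. 0 \<le> r \<longrightarrow> r < \<delta> \<longrightarrow> y \<in> PiE V (\<lambda>_. UNIV) \<longrightarrow>
      (\<forall>j\<in>V. \<bar>y j - x j\<bar> \<le> r) \<longrightarrow> \<bar>G y i - G x i - (\<Sum>j\<in>V. L i j * (y j - x j))\<bar> \<le> \<epsilon> * r"
    using grad unfolding has_coord_gradient_def by blast
  then obtain \<delta> where "\<forall>i\<in>V. \<delta> i > 0 \<and> (\<forall>r y. 0 \<le> r \<longrightarrow> r < \<delta> i \<longrightarrow>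
      y \<in> PiE V (\<lambda>_. UNIV) \<longrightarrow> (\<forall>j\<in>V. \<bar>y j - x j\<bar> \<le> r) \<longrightarrow>
      \<bar>G y i - G x i - (\<Sum>j\<in>V. L i j * (y j - x j))\<bar> \<le> \<epsilon> * r)"
    by (subst (asm) bchoice_iff) blast
  then have \<delta>: "\<And>i. i \<in> V \<Longrightarrow> \<delta> i > 0"
    and close: "\<And>i r y. i \<in> V \<Longrightarrow> 0 \<le> r \<Longrightarrow> r < \<delta> i \<Longrightarrow> y \<in> PiE V (\<lambda>_. UNIV) \<Longrightarrow>
      (\<forall>j\<in>V. \<bar>y j - x j\<bar> \<le> r) \<Longrightarrow> \<bar>G y i - G x i - (\<Sum>j\<in>V. L i j * (y j - x j))\<bar> \<le> \<epsilon> * r"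
    by auto
  define \<delta>' where "\<delta>' = Min (insert 1 (\<delta> ` V))"
  have "\<delta>' > 0" using V \<delta> by (simp add: \<delta>'_def)
  moreover have "\<delta>' \<le> \<delta> i" if "i \<in> V" for i using V that by (simp add: \<delta>'_def)
  ultimately show "\<exists>\<delta>>0. \<forall>r y. 0 \<le> r \<longrightarrow> r < \<delta> \<longrightarrow> y \<in> PiE V (\<lambda>_. UNIV) \<longrightarrow>
      (\<forall>j\<in>V. \<bar>y j - x j\<bar> \<le> r) \<longrightarrow> (\<forall>i\<in>V. \<bar>G y i - G x i - (\<Sum>j\<in>V. L i j * (y j - x j))\<bar> \<le> \<epsilon> * r)"
    by (intro exI[of _ \<delta>'] conjI allI impI ballI close) (auto intro: less_le_trans)
qed

lemma has_coord_gradient_affine_compose: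
  fixes g :: "'a::real_normed_vector \<Rightarrow> real" and b :: "nat \<Rightarrow> 'a" and c :: 'a
  assumes V: "finite V" and P: "\<And>y. P y = c + (\<Sum>j\<in>V. y j *\<^sub>R b j)"
    and dg: "(g has_derivative Dg) (at (P x))"
  shows "has_coord_gradient V (\<lambda>y. g (P y)) (\<lambda>j. Dg (b j)) x"
  unfolding has_coord_gradient_def
proof (intro allI impI)
  fix \<epsilon> :: real assume \<epsilon>: "\<epsilon> > 0"
  from dg have bl: "bounded_linear Dg" and
    approx: "\<forall>e>0. \<exists>d>0. \<forall>q. norm (q - P x) < d \<longrightarrow>
      norm (g q - g (P x) - Dg (q - P x)) \<le> e * norm (q - P x)"
    unfolding has_derivative_at_alt by auto
  interpret Dg: bounded_linear Dg by (rule bl)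
  define A where "A = 1 + (\<Sum>j\<in>V. norm (b j))"
  have A: "A > 0" unfolding A_def by (simp add: add_pos_nonneg sum_nonneg)
  obtain d where d: "d > 0" and dd: "\<And>q. norm (q - P x) < d \<Longrightarrow>
      norm (g q - g (P x) - Dg (q - P x)) \<le> (\<epsilon>/A) * norm (q - P x)"
    using approx \<epsilon> A by (meson divide_pos_pos)
  show "\<exists>\<delta>>0. \<forall>r y. 0 \<le> r \<longrightarrow> r < \<delta> \<longrightarrow> y \<in> PiE V (\<lambda>_. UNIV) \<longrightarrow>
     (\<forall>j\<in>V. \<bar>y j - x j\<bar> \<le> r) \<longrightarrow> \<bar>g (P y) - g (P x) - (\<Sum>j\<in>V. Dg (b j) * (y j - x j))\<bar> \<le> \<epsilon> * r"
  proof (intro exI[of _ "d/A"] conjI allI impI)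
    show "d/A > 0" using d A by simp
    fix r y assume r: "0 \<le> r" "r < d/A" and yr: "\<forall>j\<in>V. \<bar>y j - x j\<bar> \<le> r"
    have diff: "P y - P x = (\<Sum>j\<in>V. (y j - x j) *\<^sub>R b j)"
      unfolding P by (simp add: sum_subtractf[symmetric] scaleR_diff_left)
    have "norm (P y - P x) \<le> (\<Sum>j\<in>V. norm ((y j - x j) *\<^sub>R b j))" unfolding diff by (rule norm_sum)
    also have "\<dots> \<le> (\<Sum>j\<in>V. r * norm (b j))"
      using yr by (intro sum_mono) (auto intro: mult_right_mono)
    also have "\<dots> \<le> r * A"
      unfolding A_def using r by (simp add: sum_distrib_left[symmetric] mult_left_mono)
    finally have nP: "norm (P y - P x) \<le> r * A" .
    also have "r * A < d" using r A by (simp add: pos_less_divide_eq)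
    finally have "norm (g (P y) - g (P x) - Dg (P y - P x)) \<le> (\<epsilon>/A) * norm (P y - P x)"
      by (rule dd)
    also have "\<dots> \<le> (\<epsilon>/A) * (r * A)" using nP \<epsilon> A by (intro mult_left_mono) auto
    also have "\<dots> = \<epsilon> * r" using A by simp
    also have "Dg (P y - P x) = (\<Sum>j\<in>V. Dg (b j) * (y j - x j))"
      unfolding diff by (simp add: Dg.sum Dg.scaleR mult.commute)
    finally show "\<bar>g (P y) - g (P x) - (\<Sum>j\<in>V. Dg (b j) * (y j - x j))\<bar> \<le> \<epsilon> * r" by simp
  qed
qed

lemma ex_normalised_left_kernel_vector:
  fixes w :: "nat \<Rightarrow> real"
  assumes V: "finite V" and w: "\<forall>j\<in>V. (\<Sum>i\<in>V. w i * L i j) = 0" "i0 \<in> V" "w i0 \<noteq> 0"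
  obtains k w' where "k \<in> V" "w' k = 1" "\<forall>i\<in>V. \<bar>w' i\<bar> \<le> 1" "\<forall>j\<in>V. (\<Sum>i\<in>V. w' i * L i j) = 0"
proof -
  have "Max ((\<lambda>i. \<bar>w i\<bar>) ` V) \<in> (\<lambda>i. \<bar>w i\<bar>) ` V" using V w(2) by (intro Max_in) auto
  then obtain k where k: "k \<in> V" "\<bar>w k\<bar> = Max ((\<lambda>i. \<bar>w i\<bar>) ` V)" by (metis imageE)
  have max: "\<bar>w i\<bar> \<le> \<bar>w k\<bar>" if "i \<in> V" for i using V that k(2) by simp
  then have "w k \<noteq> 0" using w(2,3) by fastforce
  have "\<forall>j\<in>V. (\<Sum>i\<in>V. w i / w k * L i j) = 0"
    using w(1) by (simp add: sum_divide_distrib[symmetric])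
  moreover have "\<forall>i\<in>V. \<bar>w i / w k\<bar> \<le> 1"
    using max \<open>w k \<noteq> 0\<close> by (simp add: abs_divide divide_le_eq_1)
  ultimately show ?thesis using that[of k "\<lambda>i. w i / w k"] k(1) \<open>w k \<noteq> 0\<close> by simp
qed

lemma abs_le_of_linear_approx:
  fixes u v :: "nat \<Rightarrow> real"
  assumes V: "finite V" and i: "i \<in> V" and v: "\<forall>j\<in>V. \<bar>v j\<bar> \<le> r"
    and u: "\<bar>u i - (\<Sum>j\<in>V. L i j * v j)\<bar> \<le> e"
  shows "\<bar>u i\<bar> \<le> (\<Sum>i\<in>V. \<Sum>j\<in>V. \<bar>L i j\<bar>) * r + e"
proof -
  have "r \<ge> 0" using v i by (meson abs_ge_zero order_trans)
  have "\<bar>\<Sum>j\<in>V. L i j * v j\<bar> \<le> (\<Sum>j\<in>V. \<bar>L i j\<bar> * r)"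
    using v by (intro order_trans[OF sum_abs] sum_mono) (auto simp: abs_mult intro: mult_left_mono)
  also have "\<dots> \<le> (\<Sum>i\<in>V. \<Sum>j\<in>V. \<bar>L i j\<bar>) * r"
    unfolding sum_distrib_right[symmetric] using V i \<open>r \<ge> 0\<close>
    by (intro mult_right_mono member_le_sum) (auto intro: sum_nonneg)
  finally show ?thesis using u by linarith
qed

lemma abs_left_kernel_sum_le:
  fixes u v w :: "nat \<Rightarrow> real"
  assumes V: "finite V" and w: "\<forall>j\<in>V. (\<Sum>i\<in>V. w i * L i j) = 0" "\<forall>i\<in>V. \<bar>w i\<bar> \<le> 1"
    and u: "\<forall>i\<in>V. \<bar>u i - (\<Sum>j\<in>V. L i j * v j)\<bar> \<le> e"
  shows "\<bar>\<Sum>i\<in>V. w i * u i\<bar> \<le> real (card V) * e"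
proof -
  have "(\<Sum>i\<in>V. w i * (\<Sum>j\<in>V. L i j * v j)) = (\<Sum>i\<in>V. \<Sum>j\<in>V. w i * L i j * v j)"
    by (simp add: sum_distrib_left mult.assoc)
  also have "\<dots> = (\<Sum>j\<in>V. (\<Sum>i\<in>V. w i * L i j) * v j)"
    by (subst sum.swap) (simp add: sum_distrib_right)
  also have "\<dots> = 0" using w(1) by simp
  finally have "(\<Sum>i\<in>V. w i * u i) = (\<Sum>i\<in>V. w i * (u i - (\<Sum>j\<in>V. L i j * v j)))"
    by (simp add: right_diff_distrib sum_subtractf)
  also have "\<bar>\<dots>\<bar> \<le> (\<Sum>i\<in>V. \<bar>w i\<bar> * \<bar>u i - (\<Sum>j\<in>V. L i j * v j)\<bar>)"
    by (simp add: sum_abs abs_mult[symmetric])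
  also have "\<dots> \<le> (\<Sum>i\<in>V. 1 * e)"
    using w(2) u by (intro sum_mono mult_mono) auto
  finally show ?thesis by simp
qed

text \<open>At a point where the Jacobian has a nonzero left-kernel vector \<open>w\<close>, the map moves
  \<open>O(r)\<close> on an \<open>r\<close>-neighbourhood but only \<open>o(r)\<close> in the direction \<open>w\<close>.\<close>
lemma thin_at_if_degenerate_jacobian:
  assumes V: "finite V" and SP: "S \<subseteq> PiE V (\<lambda>_. UNIV)" and GP: "G ` S \<subseteq> PiE V (\<lambda>_. UNIV)"
    and x: "x \<in> S" and J: "has_coord_jacobian V G L x"
    and w: "\<forall>j\<in>V. (\<Sum>i\<in>V. w i * L i j) = 0" "i0 \<in> V" "w i0 \<noteq> 0"
  shows "\<exists>M. \<forall>\<epsilon>>0. \<exists>\<delta>>0. \<exists>k w. thin_at V S G \<epsilon> M \<delta> x k w"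
proof (rule exI, intro allI impI)
  fix \<epsilon> :: real assume "\<epsilon> > 0"
  obtain k w' where k: "k \<in> V" "w' k = 1" and w'1: "\<forall>i\<in>V. \<bar>w' i\<bar> \<le> 1"
    and w'0: "\<forall>j\<in>V. (\<Sum>i\<in>V. w' i * L i j) = 0"
    using ex_normalised_left_kernel_vector[OF V w] by blast
  define \<epsilon>' where "\<epsilon>' = min 1 (\<epsilon> / real (card V))"
  have "card V > 0" using V k(1) card_gt_0_iff by blast
  then have \<epsilon>': "0 < \<epsilon>'" "\<epsilon>' \<le> 1" "real (card V) * \<epsilon>' \<le> \<epsilon>"
    using \<open>\<epsilon> > 0\<close> by (auto simp: \<epsilon>'_def min_def field_simps)
  then obtain \<delta> where "\<delta> > 0" and \<delta>: "\<forall>r y. 0 \<le> r \<longrightarrow> r < \<delta> \<longrightarrow> y \<in> PiE V (\<lambda>_. UNIV) \<longrightarrow>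
      (\<forall>j\<in>V. \<bar>y j - x j\<bar> \<le> r) \<longrightarrow>
      (\<forall>i\<in>V. \<bar>G y i - G x i - (\<Sum>j\<in>V. L i j * (y j - x j))\<bar> \<le> \<epsilon>' * r)"
    using J unfolding has_coord_jacobian_def by blast
  define M where "M = (\<Sum>i\<in>V. \<Sum>j\<in>V. \<bar>L i j\<bar>) + 1"
  have "thin_at V S G \<epsilon> M (\<delta> / 2) x k w'"
    unfolding thin_at_def
  proof (intro conjI k allI impI)
    fix r y assume r: "0 \<le> r" "r \<le> \<delta> / 2" and "y \<in> S" and yr: "\<forall>i\<in>V. \<bar>y i - x i\<bar> \<le> r"
    then have err: "\<forall>i\<in>V. \<bar>G y i - G x i - (\<Sum>j\<in>V. L i j * (y j - x j))\<bar> \<le> \<epsilon>' * r"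
      using \<delta> \<open>\<delta> > 0\<close> SP by auto
    have "\<bar>G y i - G x i\<bar> \<le> M * r" if "i \<in> V" for i
    proof -
      have "\<bar>G y i - G x i\<bar> \<le> (\<Sum>i\<in>V. \<Sum>j\<in>V. \<bar>L i j\<bar>) * r + \<epsilon>' * r"
        using err that by (intro abs_le_of_linear_approx[OF V that yr]) auto
      also have "\<dots> \<le> M * r" using mult_right_mono[OF \<epsilon>'(2) r(1)] by (simp add: M_def algebra_simps)
      finally show ?thesis .
    qed
    moreover have "\<bar>\<Sum>i\<in>V. w' i * (G y i - G x i)\<bar> \<le> \<epsilon> * r"
      using abs_left_kernel_sum_le[OF V w'0 w'1 err] mult_right_mono[OF \<epsilon>'(3) r(1)]
      by (simp add: mult.assoc)
    ultimately show "G y \<in> slab V (G x) w' k (M * r) (\<epsilon> * r)"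
      using GP \<open>y \<in> S\<close> by (auto simp: slab_def)
  qed
  then show "\<exists>\<delta>>0. \<exists>k w. thin_at V S G \<epsilon> M \<delta> x k w"
    using \<open>\<delta> > 0\<close> by (intro exI[of _ "\<delta> / 2"] conjI exI[of _ k] exI[of _ w']) simp_all
qed

lemma AE_not_in_critical_values:
  assumes V: "finite V" "V \<noteq> {}"
    and SP: "S \<subseteq> PiE V (\<lambda>_. UNIV)" and GP: "G ` S \<subseteq> PiE V (\<lambda>_. UNIV)"
    and crit: "\<And>x. x \<in> S \<Longrightarrow> \<exists>L. has_coord_jacobian V G L x \<and>
                 (\<exists>w. (\<forall>j\<in>V. (\<Sum>i\<in>V. w i * L i j) = 0) \<and> (\<exists>i\<in>V. w i \<noteq> 0))"
  shows "AE z in PiM V (\<lambda>_. lborel). z \<notin> G ` S"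
proof (rule AE_not_in_image_thin[OF V])
  fix x assume x: "x \<in> S"
  then obtain L w i0 where "has_coord_jacobian V G L x" "\<forall>j\<in>V. (\<Sum>i\<in>V. w i * L i j) = 0"
    "i0 \<in> V" "w i0 \<noteq> 0"
    using crit by blast
  then show "\<exists>M. \<forall>\<epsilon>>0. \<exists>\<delta>>0. \<exists>k w. thin_at V S G \<epsilon> M \<delta> x k w"
    by (intro thin_at_if_degenerate_jacobian[OF V(1) SP GP x]) auto
qed

section \<open>Regular points\<close>

lemma ex_left_inverse_if_left_kernel_trivial:
  fixes L :: "nat \<Rightarrow> nat \<Rightarrow> real"
  assumes inj: "\<And>w. \<forall>j<n. (\<Sum>i<n. w i * L i j) = 0 \<Longrightarrow> \<forall>i<n. w i = 0"
  obtains B where "\<And>v j. j < n \<Longrightarrow> v j = (\<Sum>i<n. B j i * (\<Sum>k<n. L i k * v k))"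
proof -
  define A where "A = Matrix.mat n n (\<lambda>(i, j). L i j)"
  have A: "A \<in> carrier_mat n n" unfolding A_def by simp
  have "Determinant.det (transpose_mat A) \<noteq> 0"
  proof
    assume "Determinant.det (transpose_mat A) = 0"
    then obtain w where w: "w \<in> carrier_vec n" "w \<noteq> 0\<^sub>v n" "transpose_mat A *\<^sub>v w = 0\<^sub>v n"
      using det_0_iff_vec_prod_zero[of "transpose_mat A"] A by auto
    have "(\<Sum>i<n. (w $ i) * L i j) = (transpose_mat A *\<^sub>v w) $ j" if "j < n" for j
      using that w(1) A unfolding A_def
      by (simp add: scalar_prod_def row_def col_def lessThan_atLeast0 mult.commute)
    then have "\<forall>j<n. (\<Sum>i<n. (w $ i) * L i j) = 0" using w(3) by simp
    from inj[OF this] have "w = 0\<^sub>v n" using w(1) by (intro eq_vecI) auto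
    with w(2) show False by simp
  qed
  then have "Determinant.det A \<noteq> 0" using det_transpose[OF A] by simp
  from det_non_zero_imp_unit[OF A this] obtain B where B: "B \<in> carrier_mat n n" "B * A = 1\<^sub>m n"
    unfolding Units_def by (auto simp: ring_mat_def)
  show ?thesis
  proof (rule that[of "\<lambda>j i. B $$ (j, i)"])
    fix v :: "nat \<Rightarrow> real" and j assume j: "j < n"
    have Av: "(A *\<^sub>v vec n v) $ i = (\<Sum>k<n. L i k * v k)" if "i < n" for i
      using that unfolding A_def by (simp add: scalar_prod_def row_def lessThan_atLeast0)
    have "vec n v = (B * A) *\<^sub>v vec n v" unfolding B(2) by simp
    also have "\<dots> = B *\<^sub>v (A *\<^sub>v vec n v)" using A B(1) by simp
    finally have "v j = (B *\<^sub>v (A *\<^sub>v vec n v)) $ j" using j by (metis index_vec)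
    also have "\<dots> = (\<Sum>i<n. B $$ (j, i) * (\<Sum>k<n. L i k * v k))"
      using j B A Av by (simp add: scalar_prod_def row_def lessThan_atLeast0)
    finally show "v j = (\<Sum>i<n. B $$ (j, i) * (\<Sum>k<n. L i k * v k))" .
  qed
qed

lemma linear_inverse_bound:
  fixes L :: "nat \<Rightarrow> nat \<Rightarrow> real"
  assumes inj: "\<And>w. \<forall>j<n. (\<Sum>i<n. w i * L i j) = 0 \<Longrightarrow> \<forall>i<n. w i = 0"
  shows "\<exists>C>0. \<forall>v t. (\<forall>i<n. \<bar>\<Sum>j<n. L i j * v j\<bar> \<le> t) \<longrightarrow> (\<forall>j<n. \<bar>v j\<bar> \<le> C * t)"
proof -
  obtain B where B: "\<And>v j. j < n \<Longrightarrow> v j = (\<Sum>i<n. B j i * (\<Sum>k<n. L i k * v k))"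
    using ex_left_inverse_if_left_kernel_trivial[OF inj] by blast
  define C where "C = 1 + (\<Sum>j<n. \<Sum>i<n. \<bar>B j i\<bar>)"
  have "\<bar>v j\<bar> \<le> C * t" if t: "\<forall>i<n. \<bar>\<Sum>k<n. L i k * v k\<bar> \<le> t" and j: "j < n" for v t j
  proof -
    have "t \<ge> 0" using t j by (meson abs_ge_zero order_trans)
    have "\<bar>v j\<bar> = \<bar>\<Sum>i<n. B j i * (\<Sum>k<n. L i k * v k)\<bar>" using B[OF j, of v] by simp
    also have "\<dots> \<le> (\<Sum>i<n. \<bar>B j i\<bar> * \<bar>\<Sum>k<n. L i k * v k\<bar>)"
      by (simp add: sum_abs abs_mult[symmetric])
    also have "\<dots> \<le> (\<Sum>i<n. \<bar>B j i\<bar> * t)" using t by (intro sum_mono mult_left_mono) auto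
    also have "\<dots> \<le> C * t"
    proof -
      have "(\<Sum>i<n. \<bar>B j i\<bar>) \<le> (\<Sum>j<n. \<Sum>i<n. \<bar>B j i\<bar>)"
        using j by (intro member_le_sum) (auto intro: sum_nonneg)
      then show ?thesis
        unfolding C_def sum_distrib_right[symmetric] using \<open>t \<ge> 0\<close> by (simp add: mult_right_mono)
    qed
    finally show ?thesis .
  qed
  moreover have "C > 0" unfolding C_def by (simp add: add_pos_nonneg sum_nonneg)
  ultimately show ?thesis by blast
qed

lemma regular_point_isolated:
  fixes G :: "(nat \<Rightarrow> real) \<Rightarrow> (nat \<Rightarrow> real)"
  assumes x: "x \<in> PiE {..<n} (\<lambda>_. UNIV)" and J: "has_coord_jacobian {..<n} G L x"
    and inj: "\<And>w. \<forall>j<n. (\<Sum>i<n. w i * L i j) = 0 \<Longrightarrow> \<forall>i<n. w i = 0"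
  shows "\<exists>\<delta>>0. \<forall>y\<in>PiE {..<n} (\<lambda>_. UNIV). (\<forall>j<n. \<bar>y j - x j\<bar> < \<delta>) \<longrightarrow> G y = G x \<longrightarrow> y = x"
proof -
  obtain C where C: "C > 0"
    and CB: "\<And>v t. \<forall>i<n. \<bar>\<Sum>j<n. L i j * v j\<bar> \<le> t \<Longrightarrow> \<forall>j<n. \<bar>v j\<bar> \<le> C * t"
    using linear_inverse_bound[OF inj] by blast
  define \<epsilon> where "\<epsilon> = 1 / (2 * (real n + 1) * C)"
  have "\<epsilon> > 0" unfolding \<epsilon>_def using C by simp
  then obtain \<delta> where "\<delta> > 0" and D: "\<forall>r y. 0 \<le> r \<longrightarrow> r < \<delta> \<longrightarrow> y \<in> PiE {..<n} (\<lambda>_. UNIV) \<longrightarrow>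
      (\<forall>j\<in>{..<n}. \<bar>y j - x j\<bar> \<le> r) \<longrightarrow>
      (\<forall>i\<in>{..<n}. \<bar>G y i - G x i - (\<Sum>j\<in>{..<n}. L i j * (y j - x j))\<bar> \<le> \<epsilon> * r)"
    using J unfolding has_coord_jacobian_def by blast
  show ?thesis
  proof (intro exI[of _ "\<delta> / (real n + 1)"] conjI ballI impI)
    show "\<delta> / (real n + 1) > 0" using \<open>\<delta> > 0\<close> by simp
    fix y assume y: "y \<in> PiE {..<n} (\<lambda>_. UNIV)" and yd: "\<forall>j<n. \<bar>y j - x j\<bar> < \<delta> / (real n + 1)"
      and eq: "G y = G x"
    text \<open>The \<open>\<ell>\<^sub>1\<close>-distance \<open>R\<close> is at most \<open>n C \<epsilon> R = R / 2\<close>.\<close>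
    define R where "R = (\<Sum>j<n. \<bar>y j - x j\<bar>)"
    have "R \<ge> 0" unfolding R_def by (simp add: sum_nonneg)
    have "R \<le> (\<Sum>j<n. \<delta> / (real n + 1))" unfolding R_def using yd by (intro sum_mono) (auto intro: less_imp_le)
    also have "\<dots> < \<delta>" using \<open>\<delta> > 0\<close> by (simp add: divide_less_eq)
    finally have "R < \<delta>" .
    have yR: "\<forall>j\<in>{..<n}. \<bar>y j - x j\<bar> \<le> R" unfolding R_def by (auto intro: member_le_sum)
    have "\<forall>i<n. \<bar>\<Sum>j<n. L i j * (y j - x j)\<bar> \<le> \<epsilon> * R"
      using D[rule_format, OF \<open>R \<ge> 0\<close> \<open>R < \<delta>\<close> y yR[rule_format]] eq by simp
    then have "\<forall>j<n. \<bar>y j - x j\<bar> \<le> C * (\<epsilon> * R)" by (rule CB)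
    then have "R \<le> (\<Sum>j<n. C * (\<epsilon> * R))" unfolding R_def by (intro sum_mono) auto
    also have "\<dots> = real n / (2 * (real n + 1)) * R" using C by (simp add: \<epsilon>_def)
    finally have "R \<le> real n / (2 * (real n + 1)) * R" .
    moreover have "real n / (2 * (real n + 1)) < 1" by (simp add: divide_less_eq)
    ultimately have "R = 0" using \<open>R \<ge> 0\<close> by (smt (verit) mult_less_cancel_right2)
    then have "\<forall>j<n. y j = x j" using yR by auto
    then show "y = x" using x y by (intro PiE_ext) auto
  qed
qed

section \<open>Chords near the start of a \<open>C\<^sup>1\<close> Jordan curve\<close>

locale C1_jordan_curve =
  fixes \<gamma> :: "real \<Rightarrow> complex" and t0 :: real
  assumes jordan: "C1_jordan_param \<gamma>"
begin

definition \<Gamma> :: "real \<Rightarrow> complex" where "\<Gamma> u = \<gamma> (t0 + u)"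

definition tangent :: complex where "tangent = vector_derivative \<gamma> (at t0)"

sublocale periodic_fun_simple \<gamma> "2 * pi"
  using jordan by unfold_locales (simp add: C1_jordan_param_def)

lemma \<Gamma>_minus_period: "\<Gamma> (u - 2 * pi) = \<Gamma> u"
  unfolding \<Gamma>_def using plus_period[of "t0 + u - 2 * pi"] by (simp add: add_diff_eq)

lemma \<Gamma>_eq_start_imp:
  assumes s: "0 \<le> s" "s \<le> 2 * pi" and eq: "\<Gamma> s = \<Gamma> 0"
  shows "s = 0 \<or> s = 2 * pi"
proof -
  have inj: "a = b" if "a \<in> {0..<2*pi}" "b \<in> {0..<2*pi}" "\<gamma> a = \<gamma> b" for a b
    using jordan that unfolding C1_jordan_param_def by blast
  define r where "r = t0 - of_int \<lfloor>t0 / (2 * pi)\<rfloor> * (2 * pi)"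
  have r: "0 \<le> r" "r < 2 * pi"
    using floor_divide_lower[of "2 * pi" t0] floor_divide_upper[of "2 * pi" t0]
    by (auto simp: r_def algebra_simps)
  have \<Gamma>r: "\<Gamma> u = \<gamma> (r + u)" for u
    using plus_of_int[of "r + u" "\<lfloor>t0 / (2 * pi)\<rfloor>"] by (simp add: \<Gamma>_def r_def algebra_simps)
  show ?thesis
  proof (cases "r + s < 2 * pi")
    case True
    then show ?thesis using inj[of "r + s" r] eq \<Gamma>r r s by simp
  next
    case False
    have "\<gamma> (r + s - 2 * pi) = \<gamma> (r + s)" using plus_period[of "r + s - 2 * pi"] by simp
    then show ?thesis using inj[of "r + s - 2 * pi" r] eq \<Gamma>r r s False by simp
  qed
qed

lemma continuous_derivative_\<gamma>:
  obtains D where "\<And>t. (\<gamma> has_vector_derivative D t) (at t)" "continuous_on UNIV D"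
  using jordan unfolding C1_jordan_param_def C1_differentiable_on_def by auto

lemma has_vector_derivative_\<Gamma>:
  assumes "(\<gamma> has_vector_derivative D) (at (t0 + u))"
  shows "(\<Gamma> has_vector_derivative D) (at u)"
proof -
  have "((\<lambda>u. t0 + u) has_vector_derivative 1) (at u)" by (auto intro!: derivative_eq_intros)
  from vector_diff_chain_at[OF this assms] show ?thesis
    unfolding \<Gamma>_def[abs_def] by (simp add: comp_def)
qed

lemma differentiable_\<Gamma>: "\<Gamma> differentiable (at u)"
  by (metis has_vector_derivative_\<Gamma> continuous_derivative_\<gamma> differentiableI_vector)

lemma isCont_\<Gamma>: "isCont \<Gamma> u"
  by (rule differentiable_imp_continuous_within[OF differentiable_\<Gamma>])

lemma tangent_nonzero: "tangent \<noteq> 0"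
  using jordan unfolding C1_jordan_param_def tangent_def by auto

text \<open>Near the start the chord lengths are \<open>|\<gamma>'(t0)| |u - v|\<close> up to \<open>\<eta> |u - v|\<close>; this uses
  the continuity of \<open>\<gamma>'\<close>, not only its existence.\<close>
lemma chord_length_approx:
  assumes \<eta>: "\<eta> > 0"
  obtains \<rho> where "\<rho> > 0" "\<And>u v. \<bar>u\<bar> < \<rho> \<Longrightarrow> \<bar>v\<bar> < \<rho> \<Longrightarrow>
    \<bar>cmod (\<Gamma> u - \<Gamma> v) - cmod tangent * \<bar>u - v\<bar>\<bar> \<le> \<eta> * \<bar>u - v\<bar>"
proof -
  obtain D where D: "\<And>t. (\<gamma> has_vector_derivative D t) (at t)" and cD: "continuous_on UNIV D"
    using continuous_derivative_\<gamma> by blast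
  have TD: "tangent = D t0" unfolding tangent_def using D vector_derivative_at by blast
  obtain \<rho> where \<rho>: "\<rho> > 0" and close: "\<And>s. dist s t0 < \<rho> \<Longrightarrow> dist (D s) (D t0) < \<eta>"
    using cD \<eta> unfolding continuous_on_eq_continuous_at[OF open_UNIV] continuous_at_eps_delta by blast
  define f where "f s = \<Gamma> s - of_real s * tangent" for s
  have "(f has_derivative (\<lambda>h. h *\<^sub>R (D (t0 + s) - tangent))) (at s within ball 0 \<rho>)" for s
  proof -
    have "((\<lambda>u. of_real u * tangent) has_vector_derivative tangent) (at s)"
      by (auto intro!: derivative_eq_intros simp: has_vector_derivative_def scaleR_conv_of_real)
    then have "(f has_vector_derivative (D (t0 + s) - tangent)) (at s)"
      unfolding f_def using has_vector_derivative_\<Gamma>[OF D] by (intro has_vector_derivative_diff)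
    then show ?thesis unfolding has_vector_derivative_def by (rule has_derivative_at_withinI)
  qed
  moreover have "onorm (\<lambda>h. h *\<^sub>R (D (t0 + s) - tangent)) \<le> \<eta>" if "s \<in> ball 0 \<rho>" for s
  proof -
    have "onorm (\<lambda>h::real. h *\<^sub>R (D (t0 + s) - tangent)) = norm (D (t0 + s) - tangent)"
      using onorm_scaleR_left[OF bounded_linear_ident] by (simp add: onorm_id)
    then show ?thesis using close[of "t0 + s"] that TD by (simp add: dist_norm)
  qed
  ultimately have "norm (f u - f v) \<le> \<eta> * norm (u - v)" if "\<bar>u\<bar> < \<rho>" "\<bar>v\<bar> < \<rho>" for u v
    using that by (intro differentiable_bound[OF convex_ball]) auto
  moreover have "f u - f v = (\<Gamma> u - \<Gamma> v) - of_real (u - v) * tangent" for u v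
    unfolding f_def by (simp add: algebra_simps)
  moreover have "cmod (of_real (u - v) * tangent) = cmod tangent * \<bar>u - v\<bar>" for u v
    by (simp add: norm_mult norm_of_real[symmetric] of_real_diff[symmetric] del: of_real_diff)
  ultimately show ?thesis
    using that[OF \<rho>] by (metis abs_norm_cancel norm_triangle_ineq3 order_trans real_norm_def)
qed

text \<open>A closed polygon with vertices near the start of the curve, whose parameters increase
  along all sides but one, has that side nearly as long as all the others together: the
  parameter jumps back across it by the total advance along the others.\<close>
lemma long_side_of_polygon_near_start:
  fixes u :: "nat \<Rightarrow> real"
  assumes \<eta>: "0 < \<eta>" "\<eta> < cmod tangent"
    and chord: "\<And>u v. \<bar>u\<bar> < \<rho> \<Longrightarrow> \<bar>v\<bar> < \<rho> \<Longrightarrow>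
      \<bar>cmod (\<Gamma> u - \<Gamma> v) - cmod tangent * \<bar>u - v\<bar>\<bar> \<le> \<eta> * \<bar>u - v\<bar>"
    and u: "\<And>i. i \<le> n \<Longrightarrow> \<bar>u i\<bar> < \<rho>" "u n = u 0"
    and k: "k < n" and incr: "\<And>i. i < n \<Longrightarrow> i \<noteq> k \<Longrightarrow> u i < u (Suc i)"
  shows "(cmod tangent - \<eta>) * (\<Sum>i\<in>{..<n} - {k}. cmod (\<Gamma> (u (Suc i)) - \<Gamma> (u i)))
           \<le> (cmod tangent + \<eta>) * cmod (\<Gamma> (u (Suc k)) - \<Gamma> (u k))"
proof -
  define c where "c = cmod tangent"
  define d where "d i = cmod (\<Gamma> (u (Suc i)) - \<Gamma> (u i))" for i
  define X where "X = (\<Sum>i\<in>{..<n} - {k}. u (Suc i) - u i)"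
  have chord_i: "\<bar>d i - c * \<bar>u (Suc i) - u i\<bar>\<bar> \<le> \<eta> * \<bar>u (Suc i) - u i\<bar>" if "i < n" for i
    unfolding d_def c_def using that by (intro chord u) auto
  have "(\<Sum>i<n. u (Suc i) - u i) = 0" using u(2) by (simp add: sum_lessThan_telescope)
  moreover have "(\<Sum>i<n. u (Suc i) - u i) = (u (Suc k) - u k) + X"
    unfolding X_def using k by (simp add: sum.remove)
  ultimately have jump_back: "u k - u (Suc k) = X" by simp
  have "(\<Sum>i\<in>{..<n} - {k}. d i) \<le> (\<Sum>i\<in>{..<n} - {k}. (c + \<eta>) * (u (Suc i) - u i))"
  proof (rule sum_mono)
    fix i assume "i \<in> {..<n} - {k}"
    then have "i < n" "u i < u (Suc i)" using incr by auto
    then show "d i \<le> (c + \<eta>) * (u (Suc i) - u i)" using chord_i[of i] by (simp add: algebra_simps)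
  qed
  also have "\<dots> = (c + \<eta>) * X" unfolding X_def by (simp add: sum_distrib_left)
  finally have others: "(\<Sum>i\<in>{..<n} - {k}. d i) \<le> (c + \<eta>) * X" .
  have "(c - \<eta>) * X \<le> (c - \<eta>) * \<bar>u (Suc k) - u k\<bar>"
    using jump_back \<eta> by (intro mult_left_mono) (auto simp: c_def)
  also have "\<dots> \<le> d k" using chord_i[OF k] by (simp add: algebra_simps)
  finally have long: "(c - \<eta>) * X \<le> d k" .
  have "(c - \<eta>) * (\<Sum>i\<in>{..<n} - {k}. d i) \<le> (c - \<eta>) * ((c + \<eta>) * X)"
    using others \<eta> by (intro mult_left_mono) (auto simp: c_def)
  also have "\<dots> = (c + \<eta>) * ((c - \<eta>) * X)" by (simp add: algebra_simps)
  also have "\<dots> \<le> (c + \<eta>) * d k" using long \<eta> by (intro mult_left_mono) (auto simp: c_def)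
  finally show ?thesis by (simp add: c_def d_def)
qed

end

lemma ex_margin_for_less:
  fixes A S c :: real
  assumes "0 < A" "A < S" "0 < c"
  obtains \<eta> where "0 < \<eta>" "\<eta> < c" "(c + \<eta>) * A < (c - \<eta>) * S"
proof
  define \<eta> where "\<eta> = c * (S - A) / (2 * (S + A))"
  have "(S - A) / (2 * (S + A)) < 1" using assms by (simp add: divide_less_eq)
  then have "c * ((S - A) / (2 * (S + A))) < c * 1" using assms by (intro mult_strict_left_mono)
  then show "\<eta> < c" by (simp add: \<eta>_def)
  show "0 < \<eta>" using assms by (simp add: \<eta>_def)
  have "\<eta> * (S + A) = c * (S - A) / 2" using assms by (simp add: \<eta>_def field_simps)
  moreover have "c * (S - A) > 0" using assms by simp
  ultimately have "\<eta> * (S + A) < c * (S - A)" by linarith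
  then show "(c + \<eta>) * A < (c - \<eta>) * S" by (simp add: algebra_simps)
qed

section \<open>Inscribed polygons of prescribed shape\<close>

text \<open>A point \<open>x\<close> of \<open>\<real>\<^sup>n\<close> encodes the vertex parameters \<open>\<sigma>\<^sub>1, \<dots>, \<sigma>\<^sub>n\<^sub>-\<^sub>1\<close> as \<open>x 0, \<dots>, x (n - 2)\<close>
  and the scale \<open>\<lambda>\<close> as \<open>x (n - 1)\<close>; \<open>shape x\<close> is the vector of side lengths divided by \<open>\<lambda>\<close>,
  made extensional (\<open>undefined\<close> outside \<open>{..<n}\<close>) so that it is a point of the product space.\<close>
locale inscribed_polygons = C1_jordan_curve +
  fixes n :: nat
  assumes n: "3 \<le> n"
begin

definition vertex :: "(nat \<Rightarrow> real) \<Rightarrow> nat \<Rightarrow> real" where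
  "vertex x i = (if i = 0 then 0 else if i = n then 2 * pi else x (i - 1))"

definition side :: "(nat \<Rightarrow> real) \<Rightarrow> nat \<Rightarrow> real" where
  "side x i = cmod (\<Gamma> (vertex x (Suc i)) - \<Gamma> (vertex x i))"

definition shape :: "(nat \<Rightarrow> real) \<Rightarrow> nat \<Rightarrow> real" where
  "shape x = (\<lambda>i. if i < n then side x i / x (n - 1) else undefined)"

definition configs :: "(nat \<Rightarrow> real) set" where
  "configs = {x \<in> PiE {..<n} (\<lambda>_. UNIV). 0 < x (n - 1) \<and>
     (\<forall>i<n. vertex x i < vertex x (Suc i)) \<and> (\<forall>i<n. 0 < side x i)}"

definition critical_configs :: "(nat \<Rightarrow> real) set" where
  "critical_configs = {x \<in> configs. \<forall>L. has_coord_jacobian {..<n} shape L x \<longrightarrow>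
     (\<exists>w. (\<forall>j\<in>{..<n}. (\<Sum>i\<in>{..<n}. w i * L i j) = 0) \<and> (\<exists>i\<in>{..<n}. w i \<noteq> 0))}"

lemma vertex_0 [simp]: "vertex x 0 = 0" and vertex_n [simp]: "vertex x n = 2 * pi"
  using n by (auto simp: vertex_def)

text \<open>\<open>shape y i\<close> depends on \<open>y\<close> only through the affine image \<open>(\<sigma>\<^sub>i, \<sigma>\<^sub>i\<^sub>+\<^sub>1, \<lambda>)\<close>.\<close>
lemma has_coord_gradient_shape:
  assumes x: "x \<in> configs" and i: "i < n"
  shows "\<exists>l. has_coord_gradient {..<n} (\<lambda>y. shape y i) l x"
proof -
  define g :: "real \<times> real \<times> real \<Rightarrow> real" where
    "g q = cmod (\<Gamma> (fst (snd q)) - \<Gamma> (fst q)) / snd (snd q)" for q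
  define P where "P y = (vertex y i, vertex y (Suc i), y (n - 1))" for y :: "nat \<Rightarrow> real"
  define b :: "nat \<Rightarrow> real \<times> real \<times> real" where
    "b j = (if 0 < i \<and> j = i - 1 then 1 else 0, if Suc i < n \<and> j = i then 1 else 0,
            if j = n - 1 then 1 else 0)" for j
  define c :: "real \<times> real \<times> real" where "c = (0, if Suc i = n then 2 * pi else 0, 0)"
  have "shape y i = g (P y)" for y unfolding shape_def g_def P_def side_def using i by simp
  moreover have "P y = c + (\<Sum>j\<in>{..<n}. y j *\<^sub>R b j)" for y
    using i n by (simp add: P_def vertex_def c_def b_def prod_eq_iff fst_sum snd_sum
        if_distrib[of "(*) _"] sum.delta cong: if_cong)
  moreover have "g differentiable (at (P x))"
  proof -
    have "\<Gamma> (vertex x (Suc i)) - \<Gamma> (vertex x i) \<noteq> 0" "0 < x (n - 1)"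
      using x i by (auto simp: configs_def side_def)
    moreover have "(\<lambda>q::real \<times> real \<times> real. fst (snd q)) differentiable (at (P x))"
      "(\<lambda>q::real \<times> real \<times> real. fst q) differentiable (at (P x))"
      "(\<lambda>q::real \<times> real \<times> real. snd (snd q)) differentiable (at (P x))"
      by (simp_all add: bounded_linear_imp_differentiable bounded_linear_fst bounded_linear_snd
          bounded_linear_compose[of fst snd] bounded_linear_compose[of snd snd])
    ultimately show ?thesis
      unfolding g_def
      by (intro differentiable_divide differentiable_compose[of norm, OF differentiable_norm_at]
          differentiable_diff differentiable_compose[of \<Gamma>, OF differentiable_\<Gamma>])
        (auto simp: P_def)
  qed
  then obtain Dg where "(g has_derivative Dg) (at (P x))" unfolding differentiable_def by blast
  ultimately show ?thesis
    using has_coord_gradient_affine_compose[of "{..<n}" P c b g Dg x] by auto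
qed

lemma has_coord_jacobian_shape:
  assumes "x \<in> configs"
  obtains L where "has_coord_jacobian {..<n} shape L x"
proof -
  have "\<forall>i\<in>{..<n}. \<exists>l. has_coord_gradient {..<n} (\<lambda>y. shape y i) l x"
    using has_coord_gradient_shape[OF assms] by blast
  then obtain L where "\<forall>i\<in>{..<n}. has_coord_gradient {..<n} (\<lambda>y. shape y i) (L i) x"
    by (subst (asm) bchoice_iff) blast
  then show ?thesis using that has_coord_jacobianI[of "{..<n}" shape L x] by blast
qed

lemma AE_not_in_critical_shapes:
  "AE a in PiM {..<n} (\<lambda>_. lborel). a \<notin> shape ` critical_configs"
proof (rule AE_not_in_critical_values)
  show "{..<n} \<noteq> {}" using n by (auto simp: lessThan_empty_iff)
  show "critical_configs \<subseteq> PiE {..<n} (\<lambda>_. UNIV)" by (auto simp: critical_configs_def configs_def)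
  show "shape ` critical_configs \<subseteq> PiE {..<n} (\<lambda>_. UNIV)"
    by (auto simp: shape_def PiE_def extensional_def)
  fix x assume x: "x \<in> critical_configs"
  then obtain L where "has_coord_jacobian {..<n} shape L x"
    using has_coord_jacobian_shape by (auto simp: critical_configs_def)
  with x show "\<exists>L. has_coord_jacobian {..<n} shape L x \<and>
      (\<exists>w. (\<forall>j\<in>{..<n}. (\<Sum>i\<in>{..<n}. w i * L i j) = 0) \<and> (\<exists>i\<in>{..<n}. w i \<noteq> 0))"
    unfolding critical_configs_def by blast
qed simp

lemma regular_config_isolated:
  assumes "x \<in> configs" "x \<notin> critical_configs"
  shows "\<exists>\<delta>>0. \<forall>y\<in>PiE {..<n} (\<lambda>_. UNIV). (\<forall>j<n. \<bar>y j - x j\<bar> < \<delta>) \<longrightarrow> shape y = shape x \<longrightarrow> y = x"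
proof -
  obtain L where L: "has_coord_jacobian {..<n} shape L x"
    and inj: "\<not> (\<exists>w. (\<forall>j\<in>{..<n}. (\<Sum>i\<in>{..<n}. w i * L i j) = 0) \<and> (\<exists>i\<in>{..<n}. w i \<noteq> 0))"
    using assms unfolding critical_configs_def by blast
  show ?thesis
    using assms(1) inj by (intro regular_point_isolated[OF _ L]) (auto simp: configs_def)
qed

lemma side_eq_scale:
  assumes "x \<in> configs" "shape x = a" "i < n"
  shows "side x i = x (n - 1) * a i"
proof -
  have "a i = side x i / x (n - 1)" unfolding assms(2)[symmetric] shape_def using assms(3) by simp
  moreover have "x (n - 1) > 0" using assms(1) by (simp add: configs_def)
  ultimately show ?thesis by simp
qed

lemma vertex_mono:
  assumes "\<forall>i<n. vertex x i \<le> vertex x (Suc i)" "i \<le> i'" "i' \<le> n"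
  shows "vertex x i \<le> vertex x i'"
  by (rule lift_Suc_mono_le_ivl[of "{..<n}"]) (use assms in auto)

lemma vertex_range:
  assumes "\<forall>i<n. vertex x i \<le> vertex x (Suc i)" "i \<le> n"
  shows "0 \<le> vertex x i" "vertex x i \<le> 2 * pi"
  using vertex_mono[OF assms(1), of 0 i] vertex_mono[OF assms(1), of i n] assms(2) by auto

lemma solutions_bounded:
  assumes a: "a \<in> polygon_sides n"
  obtains R where "{x \<in> configs. shape x = a} \<subseteq> PiE {..<n} (\<lambda>_. {-R..R})"
proof -
  have "compact (\<Gamma> ` {0..2*pi})"
    by (intro compact_continuous_image continuous_at_imp_continuous_on) (auto intro: isCont_\<Gamma>)
  then obtain B where "\<forall>z\<in>\<Gamma> ` {0..2*pi}. norm z \<le> B" using compact_imp_bounded bounded_iff by metis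
  then have B: "\<forall>s\<in>{0..2*pi}. cmod (\<Gamma> s) \<le> B" by auto
  have a0: "a 0 > 0" using a n by (auto simp: polygon_sides_def)
  define R where "R = max (2 * pi) (2 * B / a 0)"
  have "x j \<in> {-R..R}" if x: "x \<in> configs" "shape x = a" and j: "j < n" for x j
  proof -
    have mono: "\<forall>i<n. vertex x i \<le> vertex x (Suc i)" using x by (auto simp: configs_def less_imp_le)
    show ?thesis
    proof (cases "j < n - 1")
      case True
      then have "x j = vertex x (Suc j)" by (auto simp: vertex_def)
      moreover have "Suc j \<le> n" using True by linarith
      moreover have "2 * pi \<le> R" by (simp add: R_def)
      ultimately show ?thesis using vertex_range[OF mono, of "Suc j"] pi_gt_zero by auto
    next
      case False
      text \<open>The first side bounds the scale: \<open>\<lambda> a\<^sub>0 \<le> 2 max |\<Gamma>|\<close>.\<close>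
      then have jn: "j = n - 1" using j by simp
      have "x (n - 1) * a 0 = side x 0" using side_eq_scale[OF x, of 0] n by simp
      also have "\<dots> \<le> cmod (\<Gamma> (vertex x 1)) + cmod (\<Gamma> (vertex x 0))"
        unfolding side_def by (simp add: norm_triangle_ineq4)
      also have "\<dots> \<le> B + B"
        using B vertex_range[OF mono, of 1] n by (intro add_mono) auto
      finally have "x (n - 1) \<le> 2 * B / a 0" using a0 by (simp add: field_simps)
      then show ?thesis using x by (auto simp: jn R_def configs_def)
    qed
  qed
  then show ?thesis using that[of R] by (auto simp: configs_def PiE_def Pi_def)
qed

text \<open>Solutions with shape \<open>a\<close> cannot collapse onto the start point with the first \<open>k\<close> vertices
  arriving at parameter \<open>0\<close> and the others at \<open>2 \<pi>\<close>: the side joining them would become almost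
  as long as all other sides together, contradicting \<open>a \<in> polygon_sides n\<close>.\<close>
lemma no_collapse_at_start:
  assumes a: "a \<in> polygon_sides n"
    and f: "\<And>m. f m \<in> configs" "\<And>m. shape (f m) = a"
    and lim: "\<And>i. i \<le> n \<Longrightarrow> (\<lambda>m. vertex (f m) i) \<longlonglongrightarrow> s i"
    and k: "0 < k" "k \<le> n" "\<And>i. i < k \<Longrightarrow> s i = 0" "\<And>i. k \<le> i \<Longrightarrow> i \<le> n \<Longrightarrow> s i = 2 * pi"
  shows False
proof -
  define A where "A = a (k - 1)"
  define S where "S = (\<Sum>j\<in>{..<n} - {k - 1}. a j)"
  define c where "c = cmod tangent"
  have "A < S" "0 < A" using a k by (auto simp: polygon_sides_def A_def S_def)
  have "c > 0" using tangent_nonzero by (simp add: c_def)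
  obtain \<eta> where \<eta>: "0 < \<eta>" "\<eta> < c" and key: "(c + \<eta>) * A < (c - \<eta>) * S"
    using ex_margin_for_less[OF \<open>0 < A\<close> \<open>A < S\<close> \<open>c > 0\<close>] by blast
  obtain \<rho> where "\<rho> > 0" and chord: "\<And>u v. \<bar>u\<bar> < \<rho> \<Longrightarrow> \<bar>v\<bar> < \<rho> \<Longrightarrow>
      \<bar>cmod (\<Gamma> u - \<Gamma> v) - c * \<bar>u - v\<bar>\<bar> \<le> \<eta> * \<bar>u - v\<bar>"
    using chord_length_approx[OF \<eta>(1)] unfolding c_def by blast
  obtain m where m: "\<And>i. i \<le> n \<Longrightarrow> \<bar>vertex (f m) i - s i\<bar> < \<rho>"
    using ex_all_close_of_tendsto[of "{..n}" "\<lambda>i m. vertex (f m) i" s \<rho>] lim \<open>\<rho> > 0\<close> by auto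
  define y where "y = f m"
  define u where "u i = vertex y i - s i" for i
  have \<Gamma>u: "\<Gamma> (u i) = \<Gamma> (vertex y i)" if "i \<le> n" for i
    using k(3)[of i] k(4)[of i] that \<Gamma>_minus_period by (cases "i < k") (auto simp: u_def)
  have step: "u (Suc i) - u i = vertex y (Suc i) - vertex y i" if "i < n" "i \<noteq> k - 1" for i
  proof -
    have "s (Suc i) = s i"
      using k that by (cases "Suc i < k") (auto simp: not_less)
    then show ?thesis by (simp add: u_def)
  qed
  have "(c - \<eta>) * (\<Sum>i\<in>{..<n} - {k - 1}. cmod (\<Gamma> (u (Suc i)) - \<Gamma> (u i)))
      \<le> (c + \<eta>) * cmod (\<Gamma> (u (Suc (k - 1))) - \<Gamma> (u (k - 1)))"
    unfolding c_def
  proof (rule long_side_of_polygon_near_start[OF \<eta>[unfolded c_def]])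
    show "\<bar>u i\<bar> < \<rho>" if "i \<le> n" for i using m[OF that] by (simp add: u_def y_def)
    show "u n = u 0" using k by (simp add: u_def)
    show "u i < u (Suc i)" if "i < n" "i \<noteq> k - 1" for i
    proof -
      have "vertex y i < vertex y (Suc i)" using f(1)[of m] that(1) by (simp add: y_def configs_def)
      then show ?thesis using step[OF that] by simp
    qed
  qed (use k chord in \<open>auto simp: c_def\<close>)
  moreover have sides: "cmod (\<Gamma> (u (Suc i)) - \<Gamma> (u i)) = y (n - 1) * a i" if "i < n" for i
    using \<Gamma>u[of i] \<Gamma>u[of "Suc i"] side_eq_scale[OF f[of m] that] that
    by (simp add: side_def y_def)
  then have "(\<Sum>i\<in>{..<n} - {k - 1}. cmod (\<Gamma> (u (Suc i)) - \<Gamma> (u i))) = y (n - 1) * S"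
    by (simp add: S_def sum_distrib_left)
  moreover have "cmod (\<Gamma> (u (Suc (k - 1))) - \<Gamma> (u (k - 1))) = y (n - 1) * A"
    using sides[of "k - 1"] k by (simp add: A_def)
  ultimately have "(c - \<eta>) * (y (n - 1) * S) \<le> (c + \<eta>) * (y (n - 1) * A)" by simp
  then have "y (n - 1) * ((c - \<eta>) * S) \<le> y (n - 1) * ((c + \<eta>) * A)" by (simp add: mult_ac)
  moreover have "y (n - 1) > 0" using f(1) by (simp add: y_def configs_def)
  ultimately have "(c - \<eta>) * S \<le> (c + \<eta>) * A" by simp
  with key show False by linarith
qed

lemma tendsto_vertex:
  assumes "f \<longlonglongrightarrow> x"
  shows "(\<lambda>m. vertex (f m) i) \<longlonglongrightarrow> vertex x i"
proof (cases "i = 0 \<or> i = n")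
  case False
  then show ?thesis using tendsto_coordinate[OF assms, of "i - 1"] by (simp add: vertex_def)
qed (auto simp: vertex_def)

lemma limit_of_solutions:
  assumes f: "\<And>m. f m \<in> configs" "\<And>m. shape (f m) = a" and lim: "f \<longlonglongrightarrow> x"
  shows "\<And>i. i < n \<Longrightarrow> side x i = x (n - 1) * a i" "0 \<le> x (n - 1)"
    "\<forall>i<n. vertex x i \<le> vertex x (Suc i)"
proof -
  have scale: "(\<lambda>m. f m (n - 1)) \<longlonglongrightarrow> x (n - 1)" by (rule tendsto_coordinate[OF lim])
  show "side x i = x (n - 1) * a i" if "i < n" for i
  proof (rule LIMSEQ_unique)
    show "(\<lambda>m. side (f m) i) \<longlonglongrightarrow> side x i"
      unfolding side_def by (intro tendsto_norm tendsto_diff isCont_tendsto_compose[OF isCont_\<Gamma>]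
          tendsto_vertex[OF lim])
    show "(\<lambda>m. side (f m) i) \<longlonglongrightarrow> x (n - 1) * a i"
      unfolding side_eq_scale[OF f that] by (rule tendsto_mult_right[OF scale])
  qed
  have "0 \<le> f m (n - 1)" for m using f(1)[of m] by (simp add: configs_def)
  then show "0 \<le> x (n - 1)" by (intro LIMSEQ_le_const[OF scale]) simp
  show "\<forall>i<n. vertex x i \<le> vertex x (Suc i)"
  proof (intro allI impI)
    fix i assume "i < n"
    then have "vertex (f m) i \<le> vertex (f m) (Suc i)" for m
      using f(1)[of m] by (simp add: configs_def less_imp_le)
    then show "vertex x i \<le> vertex x (Suc i)"
      by (intro LIMSEQ_le[OF tendsto_vertex[OF lim] tendsto_vertex[OF lim]]) simp
  qed
qed

text \<open>If the scale tends to \<open>0\<close>, all vertices of the limit coincide with the start point; by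
  injectivity their parameters are \<open>0\<close> up to some index \<open>k\<close> and \<open>2 \<pi>\<close> from there on.\<close>
lemma solutions_do_not_shrink:
  assumes a: "a \<in> polygon_sides n" and f: "\<And>m. f m \<in> configs" "\<And>m. shape (f m) = a"
    and lim: "f \<longlonglongrightarrow> x"
  shows "x (n - 1) \<noteq> 0"
proof
  assume "x (n - 1) = 0"
  note limit = limit_of_solutions[OF f lim]
  have start: "\<Gamma> (vertex x i) = \<Gamma> 0" if "i \<le> n" for i
    using that
  proof (induction i)
    case (Suc i)
    then have "side x i = 0" using limit(1)[of i] \<open>x (n - 1) = 0\<close> by simp
    with Suc show ?case by (simp add: side_def)
  qed simp
  have zero_or_2pi: "vertex x i = 0 \<or> vertex x i = 2 * pi" if "i \<le> n" for i
    using \<Gamma>_eq_start_imp[OF vertex_range[OF limit(3) that] start[OF that]] .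
  define k where "k = (LEAST i. vertex x i = 2 * pi)"
  have "vertex x k = 2 * pi" unfolding k_def by (rule LeastI[of _ n]) simp
  moreover have "k \<le> n" unfolding k_def by (rule Least_le) simp
  moreover have "vertex x i = 0" if "i < k" for i
    using not_less_Least[OF that[unfolded k_def]] zero_or_2pi[of i] that \<open>k \<le> n\<close> by auto
  moreover have "vertex x i = 2 * pi" if "k \<le> i" "i \<le> n" for i
    using vertex_mono[OF limit(3) that] \<open>vertex x k = 2 * pi\<close> vertex_range[OF limit(3) that(2)] by auto
  ultimately show False
    using no_collapse_at_start[OF a f tendsto_vertex[OF lim], of k] pi_gt_zero
    by (cases k) auto
qed

lemma limit_of_solutions_in_configs:
  assumes aS: "a \<in> PiE {..<n} (\<lambda>_. UNIV)" and a: "a \<in> polygon_sides n"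
    and f: "\<And>m. f m \<in> configs" "\<And>m. shape (f m) = a" and lim: "f \<longlonglongrightarrow> x"
    and x: "x \<in> PiE {..<n} (\<lambda>_. UNIV)" "x (n - 1) \<noteq> 0"
  shows "x \<in> configs" "shape x = a"
proof -
  note limit = limit_of_solutions[OF f lim]
  have "0 < x (n - 1)" using limit(2) x(2) by simp
  have side_pos: "0 < side x i" if "i < n" for i
    using limit(1)[OF that] \<open>0 < x (n - 1)\<close> a that by (simp add: polygon_sides_def)
  moreover have "vertex x i < vertex x (Suc i)" if "i < n" for i
  proof -
    have "vertex x i \<noteq> vertex x (Suc i)" using side_pos[OF that] by (auto simp: side_def)
    then show ?thesis using limit(3) that by (simp add: less_le)
  qed
  ultimately show "x \<in> configs" using x(1) \<open>0 < x (n - 1)\<close> by (auto simp: configs_def)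
  show "shape x = a"
    using limit(1) \<open>0 < x (n - 1)\<close> aS by (auto simp: shape_def PiE_def extensional_def)
qed

lemma finite_solutions:
  assumes aS: "a \<in> PiE {..<n} (\<lambda>_. UNIV)" and a: "a \<in> polygon_sides n"
    and regular: "a \<notin> shape ` critical_configs"
  shows "finite {x \<in> configs. shape x = a}"
proof (rule ccontr)
  assume "infinite {x \<in> configs. shape x = a}"
  moreover obtain R where "{x \<in> configs. shape x = a} \<subseteq> PiE {..<n} (\<lambda>_. {-R..R})"
    using solutions_bounded[OF a] by blast
  ultimately obtain x where x: "x \<in> PiE {..<n} (\<lambda>_. {-R..R})" "x islimpt {x \<in> configs. shape x = a}"
    using Heine_Borel_imp_Bolzano_Weierstrass[OF compact_PiE_box] by blast
  then obtain f where f: "\<And>m. f m \<in> configs" "\<And>m. shape (f m) = a" "\<And>m. f m \<noteq> x"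
    and lim: "f \<longlonglongrightarrow> x"
    unfolding islimpt_sequential by blast
  have "x \<in> PiE {..<n} (\<lambda>_. UNIV)" using x(1) by (auto simp: PiE_def Pi_def)
  then have xc: "x \<in> configs" "shape x = a"
    using limit_of_solutions_in_configs[OF aS a f(1,2) lim] solutions_do_not_shrink[OF a f(1,2) lim]
    by auto
  then have "x \<notin> critical_configs" using regular by blast
  then obtain \<delta> where "\<delta> > 0" and iso: "\<forall>y\<in>PiE {..<n} (\<lambda>_. UNIV).
      (\<forall>j<n. \<bar>y j - x j\<bar> < \<delta>) \<longrightarrow> shape y = shape x \<longrightarrow> y = x"
    using regular_config_isolated[OF xc(1)] by blast
  obtain m where "\<And>j. j < n \<Longrightarrow> \<bar>f m j - x j\<bar> < \<delta>"
    using ex_all_close_of_tendsto[of "{..<n}" "\<lambda>j m. f m j" x \<delta>] tendsto_coordinate[OF lim] \<open>\<delta> > 0\<close>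
    by auto
  then have "f m = x" using iso f(1,2) xc(2) by (auto simp: configs_def)
  with f(3) show False by simp
qed

lemma neat_cyclic_params_subset:
  assumes a: "a \<in> polygon_sides n" and aS: "a \<in> PiE {..<n} (\<lambda>_. UNIV)"
  shows "neat_cyclic_params \<gamma> t0 n a \<subseteq> (\<lambda>x. (map x [0..<n - 1], x (n - 1))) ` {x \<in> configs. shape x = a}"
proof
  fix p assume "p \<in> neat_cyclic_params \<gamma> t0 n a"
  then obtain s l where p: "p = (s, l)" and len: "length s = n - 1" and "0 < l"
    and incr: "\<forall>i<n. vparam n s i < vparam n s (Suc i)"
    and sides: "\<forall>i<n. cmod (\<gamma> (t0 + vparam n s (Suc i)) - \<gamma> (t0 + vparam n s i)) = l * a i"
    unfolding neat_cyclic_params_def by blast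
  define x where "x j = (if j < n - 1 then s ! j else if j = n - 1 then l else undefined)" for j
  have vertex: "vertex x i = vparam n s i" if "i \<le> n" for i
    using that n by (auto simp: vertex_def vparam_def x_def)
  have side: "side x i = l * a i" if "i < n" for i
    using sides that vertex[of i] vertex[of "Suc i"] by (simp add: side_def \<Gamma>_def)
  have "x (n - 1) = l" by (simp add: x_def)
  have "x \<in> configs"
    unfolding configs_def
  proof (intro CollectI conjI allI impI)
    show "x \<in> PiE {..<n} (\<lambda>_. UNIV)" using n by (auto simp: x_def PiE_def extensional_def)
    show "0 < x (n - 1)" using \<open>x (n - 1) = l\<close> \<open>0 < l\<close> by simp
    fix i assume "i < n"
    then show "vertex x i < vertex x (Suc i)" using incr vertex[of i] vertex[of "Suc i"] by simp
    show "0 < side x i" using side[OF \<open>i < n\<close>] \<open>0 < l\<close> a \<open>i < n\<close> by (simp add: polygon_sides_def)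
  qed
  moreover have "shape x = a"
    using side \<open>x (n - 1) = l\<close> \<open>0 < l\<close> aS by (auto simp: shape_def PiE_def extensional_def)
  moreover have "p = (map x [0..<n - 1], x (n - 1))"
    using len p \<open>x (n - 1) = l\<close> by (auto intro: nth_equalityI simp: x_def)
  ultimately show "p \<in> (\<lambda>x. (map x [0..<n - 1], x (n - 1))) ` {x \<in> configs. shape x = a}" by blast
qed

end

theorem theorem1p6:
  fixes \<gamma> :: "real \<Rightarrow> complex" and n :: nat and t0 :: real
  assumes "C1_jordan_param \<gamma>" and "n \<ge> 3"
  shows "AE a in (\<Pi>\<^sub>M i\<in>{..<n}. lborel).
           a \<in> polygon_sides n \<longrightarrow> finite (neat_cyclic_params \<gamma> t0 n a)"
proof -
  interpret inscribed_polygons \<gamma> t0 n using assms by unfold_locales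
  show ?thesis
    using AE_space AE_not_in_critical_shapes
  proof eventually_elim
    case (elim a)
    then have aS: "a \<in> PiE {..<n} (\<lambda>_. UNIV)" by (simp add: space_PiM)
    show ?case
    proof
      assume a: "a \<in> polygon_sides n"
      have "finite {x \<in> configs. shape x = a}" using finite_solutions[OF aS a] elim by blast
      then show "finite (neat_cyclic_params \<gamma> t0 n a)"
        by (intro finite_subset[OF neat_cyclic_params_subset[OF a aS]] finite_imageI)
    qed
  qed
qed

end
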